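(* Let $1\le p<\infty$ and $f\in\mathcal S^p$. Then for any $\tau>0$, $n\in\mathbb N$ and $\varphi\in\Phi$, $$E_n(f)_p\le C_{n,\varphi,p}(\tau)\,\omega_\varphi\Big(f,\frac{\tau}{n}\Big)_p,$$ where $$C_{n,\varphi,p}(\tau):=\Big(\inf_{v\in V(\tau)}\frac{v(\tau)-v(0)}{I_{n,\varphi,p}(\tau,v)}\Big)^{1/p},\qquad I_{n,\varphi,p}(\tau,v):=\inf_{k\in\mathbb N,\,k\ge n}\int_0^\tau\varphi^p\Big(\frac{ku}{n}\Big)\,dv(u).$$ There exists a function $v^*\in V(\tau)$ at which the infimum over $v\in V(\tau)$ in the definition of $C_{n,\varphi,p}(\tau)$ is attained. Moreover, the inequality is unimprovable on the set of all non-constant $f\in\mathcal S^p$: $$K_{n,\varphi}(\tau)_p:=\sup_{f\in\mathcal S^p,\,f\not\equiv\mathrm{const}}\frac{E_n(f)_p}{\omega_\varphi(f,\tau/n)_p}=C_{n,\varphi,p}(\tau).$$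
   Context: $L$ is the space of $2\pi$-periodic Lebesgue integrable functions, with Fourier coefficients $\widehat f(k)=(2\pi)^{-1}\int_0^{2\pi}f(x)e^{-\mathrm{i}kx}\,dx$, $k\in\mathbb Z$. For $1\le p<\infty$, $\mathcal S^p$ is the space of $f\in L$ with finite norm $\|f\|_p=(\sum_{k\in\mathbb Z}|\widehat f(k)|^p)^{1/p}$; for any complex sequence $c=\{c_k\}$, $\|c\|_p=(\sum_k|c_k|^p)^{1/p}$. $E_n(f)_p=\inf\{\|f-t\|_p:t\in\mathcal T_{n-1}\}$, $\mathcal T_{n-1}$ the trigonometric polynomials $\sum_{|k|\le n-1}c_ke^{\mathrm{i}kx}$. $\Phi$ is the set of all continuous, bounded, nonnegative, even functions $\varphi:\mathbb R\to\mathbb R$ with $\varphi(0)=0$ such that $\{t:\varphi(t)=0\}$ has Lebesgue measure zero. For $\varphi\in\Phi$, $h\in\mathbb R$, $\Delta_h^\varphi f$ is the sequence $\{\varphi(kh)\widehat f(k)\}_{k\in\mathbb Z}$ and $\omega_\varphi(f,\delta)_p=\sup_{|h|\le\delta}\|\Delta_h^\varphi f\|_p$. $V(\tau)$ is the set of bounded nondecreasing functions $v$ on $[0,\tau]$ that are not constant on $[0,\tau]$; integrals are Lebesgue–Stieltjes. *)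

theory Defs
  imports "HOL-Analysis.Analysis"
begin

definition periodic_L :: "(real \<Rightarrow> complex) \<Rightarrow> bool" where
  "periodic_L f \<longleftrightarrow> (\<forall>x. f (x + 2 * pi) = f x) \<and> set_integrable lebesgue {0..2 * pi} f"

definition fourier_coeff :: "(real \<Rightarrow> complex) \<Rightarrow> int \<Rightarrow> complex" where
  "fourier_coeff f k =
     (1 / (2 * pi)) * (LINT x:{0..2 * pi}|lebesgue. f x * exp (- \<i> * of_int k * of_real x))"

definition seq_norm :: "real \<Rightarrow> (int \<Rightarrow> complex) \<Rightarrow> real" where
  "seq_norm p c = (\<Sum>\<^sub>\<infinity>k\<in>UNIV. norm (c k) powr p) powr (1 / p)"

definition Sp :: "real \<Rightarrow> (real \<Rightarrow> complex) set" where
  "Sp p = {f. periodic_L f \<and> (\<lambda>k. norm (fourier_coeff f k) powr p) summable_on (UNIV :: int set)}"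

definition trig_polys :: "nat \<Rightarrow> (real \<Rightarrow> complex) set" where
  "trig_polys m = {t. \<exists>c :: int \<Rightarrow> complex.
      t = (\<lambda>x. \<Sum>k\<in>{- int m..int m}. c k * exp (\<i> * of_int k * of_real x))}"

definition best_approx :: "nat \<Rightarrow> (real \<Rightarrow> complex) \<Rightarrow> real \<Rightarrow> real" where
  "best_approx n f p =
     Inf {seq_norm p (fourier_coeff (\<lambda>x. f x - t x)) | t. t \<in> trig_polys (n - 1)}"

definition Phi :: "(real \<Rightarrow> real) set" where
  "Phi = {\<phi>. continuous_on UNIV \<phi> \<and> bounded (range \<phi>) \<and> (\<forall>t. 0 \<le> \<phi> t)
            \<and> (\<forall>t. \<phi> (- t) = \<phi> t) \<and> \<phi> 0 = 0 \<and> {t. \<phi> t = 0} \<in> null_sets lebesgue}"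

definition Delta :: "(real \<Rightarrow> real) \<Rightarrow> real \<Rightarrow> (real \<Rightarrow> complex) \<Rightarrow> int \<Rightarrow> complex" where
  "Delta \<phi> h f k = of_real (\<phi> (of_int k * h)) * fourier_coeff f k"

definition modulus :: "(real \<Rightarrow> real) \<Rightarrow> (real \<Rightarrow> complex) \<Rightarrow> real \<Rightarrow> real \<Rightarrow> real" where
  "modulus \<phi> f \<delta> p = Sup {seq_norm p (Delta \<phi> h f) | h. \<bar>h\<bar> \<le> \<delta>}"

definition Vset :: "real \<Rightarrow> (real \<Rightarrow> real) set" where
  "Vset \<tau> = {v. mono_on {0..\<tau>} v \<and> bounded (v ` {0..\<tau>})
               \<and> (\<exists>a\<in>{0..\<tau>}. \<exists>b\<in>{0..\<tau>}. v a \<noteq> v b)}"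

text \<open>Lebesgue--Stieltjes measure of v on [0,tau]: v is extended by v(0) to the left and
  v(tau) to the right and regularized from the right, so that the total mass is v(tau) - v(0)
  (jumps at the endpoints included).\<close>
definition LS_dist :: "real \<Rightarrow> (real \<Rightarrow> real) \<Rightarrow> real \<Rightarrow> real" where
  "LS_dist \<tau> v x = (if x < 0 then v 0 else if \<tau> \<le> x then v \<tau> else Inf (v ` {x<..\<tau>}))"

definition LS_measure :: "real \<Rightarrow> (real \<Rightarrow> real) \<Rightarrow> real measure" where
  "LS_measure \<tau> v = interval_measure (LS_dist \<tau> v)"

definition I_fun :: "nat \<Rightarrow> (real \<Rightarrow> real) \<Rightarrow> real \<Rightarrow> real \<Rightarrow> (real \<Rightarrow> real) \<Rightarrow> ennreal" where
  "I_fun n \<phi> p \<tau> v = (INF k\<in>{k::nat. n \<le> k}.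
      \<integral>\<^sup>+ u. indicator {0..\<tau>} u * ennreal (\<phi> (real k * u / real n) powr p) \<partial>LS_measure \<tau> v)"

text \<open>The ratio (v(tau) - v(0)) / I, with x / 0 = \<infinity> for x > 0 (ennreal division).\<close>
definition ratio :: "nat \<Rightarrow> (real \<Rightarrow> real) \<Rightarrow> real \<Rightarrow> real \<Rightarrow> (real \<Rightarrow> real) \<Rightarrow> ennreal" where
  "ratio n \<phi> p \<tau> v = ennreal (v \<tau> - v 0) / I_fun n \<phi> p \<tau> v"

definition C_const :: "nat \<Rightarrow> (real \<Rightarrow> real) \<Rightarrow> real \<Rightarrow> real \<Rightarrow> ennreal" where
  "C_const n \<phi> p \<tau> =
     (let m = (INF v\<in>Vset \<tau>. ratio n \<phi> p \<tau> v)
      in if m = top then top else ennreal (enn2real m powr (1 / p)))"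

definition K_const :: "nat \<Rightarrow> (real \<Rightarrow> real) \<Rightarrow> real \<Rightarrow> real \<Rightarrow> ennreal" where
  "K_const n \<phi> p \<tau> = (SUP f\<in>{f \<in> Sp p. \<not> (\<exists>c. AE x in lebesgue. f x = c)}.
      ennreal (best_approx n f p) / ennreal (modulus \<phi> f (\<tau> / real n) p))"

end

theory Submission
  imports Defs "HOL-Probability.Probability"
begin

text \<open>
  Write \<open>g k u = \<phi> (k u / n) powr p\<close> and \<open>c k = fourier_coeff f k\<close>. For \<open>u \<in> {0..\<tau>}\<close> the sum of
  \<open>g |k| u * |c k| powr p\<close> over \<open>|k| \<ge> n\<close> is at most \<open>\<omega> powr p\<close>, \<open>\<omega> = modulus \<phi> f (\<tau> / n) p\<close>, while
  the tail \<open>\<Sum>|k| \<ge> n. |c k| powr p\<close> alone bounds \<open>E powr p\<close>, \<open>E = best_approx n f p\<close> (approximate by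
  the partial Fourier sum). Integrating the first bound against \<open>dv\<close> and bounding each \<open>\<integral> g |k| dv\<close>
  from below by \<open>I = I_fun n \<phi> p \<tau> v\<close> gives \<open>E powr p * I \<le> (v \<tau> - v 0) * \<omega> powr p\<close>, which is the
  inequality.

  Sharpness and the existence of a minimizing \<open>v\<close> come from an approximate minimax theorem for the
  kernels \<open>g k\<close>, \<open>k \<ge> n\<close>, on \<open>{0..\<tau>}\<close>. Either some convex combination \<open>\<Sum>k. a k * g k\<close> stays below
  \<open>t\<close> on \<open>{0..\<tau>}\<close>; then the polynomial with coefficients \<open>a k powr (1/p)\<close> at the frequencies \<open>k\<close> has
  \<open>E / \<omega> \<ge> t powr (-1/p)\<close>. Or finitely supported probabilities on \<open>{0..\<tau>}\<close> make all means of the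
  \<open>g k\<close> almost \<open>t\<close>; then a weak limit of them (Helly's selection theorem) is \<open>dv\<close> for some
  \<open>v \<in> Vset \<tau>\<close> with \<open>ratio n \<phi> p \<tau> v \<le> 1/t\<close>. For \<open>t\<close> the reciprocal of the infimum of the ratios,
  the first alternative is impossible at all levels below \<open>t\<close>, so the second yields a minimizer; for
  larger \<open>t\<close> the second is impossible, so the first shows \<open>K_const \<ge> C_const\<close>.
\<close>

section \<open>Trigonometric polynomials and Fourier coefficients\<close>

definition trig_exp :: "int \<Rightarrow> real \<Rightarrow> complex" where
  "trig_exp k x = exp (\<i> * of_int k * of_real x)"

lemma continuous_on_trig_exp [continuous_intros]: "continuous_on S (trig_exp k)"
  unfolding trig_exp_def by (intro continuous_intros)

lemma trig_exp_periodic: "trig_exp k (x + 2 * pi) = trig_exp k x"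
proof -
  have "trig_exp k (x + 2 * pi) = trig_exp k x * exp ((2 * of_int k * pi) * \<i>)"
    unfolding trig_exp_def by (simp add: exp_add[symmetric] algebra_simps)
  also have "exp ((2 * of_int k * pi) * \<i>) = 1" by (rule exp_integer_2pi) simp
  finally show ?thesis by simp
qed

lemma integral_trig_exp: "integral {0..2*pi} (trig_exp k) = (if k = 0 then 2 * pi else 0)"
proof (cases "k = 0")
  case True
  then have "trig_exp k = (\<lambda>x. 1)" by (simp add: trig_exp_def fun_eq_iff)
  then show ?thesis using True by (simp add: scaleR_conv_of_real)
next
  case False
  define F where "F x = trig_exp k x / (\<i> * of_int k)" for x
  have "(F has_vector_derivative trig_exp k x) (at x within {0..2*pi})" for x
  proof -
    have "((\<lambda>z. exp (\<i> * of_int k * z) / (\<i> * of_int k)) has_field_derivative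
            exp (\<i> * of_int k * of_real x)) (at (of_real x))"
      using False by (auto intro!: derivative_eq_intros)
    from has_vector_derivative_real_field[OF this] show ?thesis
      unfolding F_def trig_exp_def by simp
  qed
  then have "(trig_exp k has_integral (F (2*pi) - F 0)) {0..2*pi}"
    by (intro fundamental_theorem_of_calculus) auto
  moreover have "F (2*pi) = F 0"
    using trig_exp_periodic[of k 0] by (simp add: F_def)
  ultimately show ?thesis using False by (simp add: integral_unique)
qed

lemma fourier_coeff_trig_poly:
  assumes "finite J"
  shows "fourier_coeff (\<lambda>x. \<Sum>j\<in>J. c j * trig_exp j x) k = (if k \<in> J then c k else 0)"
proof -
  have shift: "trig_exp j x * exp (- \<i> * of_int k * of_real x) = trig_exp (j - k) x" for j x
    unfolding trig_exp_def by (simp add: exp_add[symmetric] algebra_simps)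
  have "(LINT x:{0..2*pi}|lebesgue. (\<Sum>j\<in>J. c j * trig_exp j x) * exp (- \<i> * of_int k * of_real x))
      = (LINT x:{0..2*pi}|lebesgue. \<Sum>j\<in>J. c j * trig_exp (j - k) x)"
    by (simp add: sum_distrib_right shift[symmetric] mult.assoc)
  also have "\<dots> = integral {0..2*pi} (\<lambda>x. \<Sum>j\<in>J. c j * trig_exp (j - k) x)"
    by (intro set_lebesgue_integral_eq_integral(2) absolutely_integrable_continuous_real)
       (intro continuous_intros)
  also have "\<dots> = (\<Sum>j\<in>J. c j * integral {0..2*pi} (trig_exp (j - k)))"
    using assms by (simp add: integral_sum integrable_continuous_real continuous_intros)
  also have "\<dots> = (\<Sum>j\<in>J. if j = k then c j * (2 * pi) else 0)"
    by (intro sum.cong refl) (simp add: integral_trig_exp)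
  also have "\<dots> = (if k \<in> J then c k * (2 * pi) else 0)"
    using assms by (simp add: sum.delta')
  finally show ?thesis unfolding fourier_coeff_def by simp
qed

lemma fourier_coeff_const: "fourier_coeff (\<lambda>x. c) k = (if k = 0 then c else 0)"
  using fourier_coeff_trig_poly[of "{0}" "\<lambda>_. c" k] by (simp add: trig_exp_def)

lemma fourier_coeff_diff:
  assumes f: "f absolutely_integrable_on {0..2*pi}" and t: "continuous_on UNIV t"
  shows "fourier_coeff (\<lambda>x. f x - t x) k = fourier_coeff f k - fourier_coeff t k"
proof -
  let ?e = "\<lambda>x. exp (- \<i> * of_int k * of_real x)"
  have "(\<lambda>x. ?e x * f x) absolutely_integrable_on {0..2*pi}"
  proof (rule absolutely_integrable_bounded_measurable_product[OF bilinear_times _ _ _ f])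
    show "?e \<in> borel_measurable (lebesgue_on {0..2*pi})"
      by (intro continuous_imp_measurable_on_sets_lebesgue continuous_intros) auto
    show "bounded (?e ` {0..2*pi})"
      by (rule boundedI[where B=1]) (auto simp: norm_exp_eq_Re)
  qed auto
  then have "(\<lambda>x. f x * ?e x) absolutely_integrable_on {0..2*pi}"
    by (simp add: mult.commute)
  moreover have "(\<lambda>x. t x * ?e x) absolutely_integrable_on {0..2*pi}"
    by (rule absolutely_integrable_continuous_real)
       (intro continuous_intros continuous_on_subset[OF t], auto)
  ultimately have "(LINT x:{0..2*pi}|lebesgue. (f x - t x) * ?e x) =
      (LINT x:{0..2*pi}|lebesgue. f x * ?e x) - (LINT x:{0..2*pi}|lebesgue. t x * ?e x)"
    by (simp add: left_diff_distrib set_integral_diff(2))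
  then show ?thesis unfolding fourier_coeff_def by (simp add: right_diff_distrib)
qed

lemma trig_poly_in_trig_polys:
  assumes "J \<subseteq> {- int m..int m}"
  shows "(\<lambda>x. \<Sum>j\<in>J. c j * trig_exp j x) \<in> trig_polys m"
proof -
  have "(\<lambda>x. \<Sum>j\<in>J. c j * trig_exp j x) =
        (\<lambda>x. \<Sum>k\<in>{- int m..int m}. (if k \<in> J then c k else 0) * exp (\<i> * of_int k * of_real x))"
  proof
    fix x
    have "(\<Sum>j\<in>J. c j * trig_exp j x) = (\<Sum>k\<in>{- int m..int m}. if k \<in> J then c k * trig_exp k x else 0)"
      using assms by (simp add: sum.If_cases Int_absorb1)
    also have "\<dots> = (\<Sum>k\<in>{- int m..int m}. (if k \<in> J then c k else 0) * exp (\<i> * of_int k * of_real x))"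
      by (intro sum.cong) (auto simp: trig_exp_def)
    finally show "(\<Sum>j\<in>J. c j * trig_exp j x) = \<dots>" .
  qed
  then show ?thesis
    unfolding trig_polys_def by (intro CollectI exI[of _ "\<lambda>k. if k \<in> J then c k else 0"])
qed

lemma trig_polysE:
  assumes "t \<in> trig_polys m"
  obtains c where "t = (\<lambda>x. \<Sum>j\<in>{- int m..int m}. c j * trig_exp j x)"
  using assms unfolding trig_polys_def trig_exp_def by auto

lemma continuous_on_trig_polys: "t \<in> trig_polys m \<Longrightarrow> continuous_on UNIV t"
  by (erule trig_polysE) (auto intro!: continuous_intros)

lemma fourier_coeff_trig_polys_eq_0:
  "t \<in> trig_polys m \<Longrightarrow> int m < \<bar>k\<bar> \<Longrightarrow> fourier_coeff t k = 0"
  by (erule trig_polysE) (simp add: fourier_coeff_trig_poly, arith)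

lemma
  fixes g :: "'a \<Rightarrow> 'b::{topological_comm_monoid_add, t2_space}"
  assumes "finite F" "\<And>k. k \<notin> F \<Longrightarrow> g k = 0"
  shows summable_on_finite_support: "g summable_on UNIV"
    and infsum_finite_support: "infsum g UNIV = sum g F"
proof -
  show "g summable_on UNIV"
    using summable_on_cong_neutral[of F UNIV g g] assms by auto
  have "infsum g UNIV = infsum g F"
    by (rule infsum_cong_neutral) (use assms in auto)
  then show "infsum g UNIV = sum g F" using assms by simp
qed

lemma trig_poly_in_Sp:
  assumes "finite J"
  shows "(\<lambda>x. \<Sum>j\<in>J. c j * trig_exp j x) \<in> Sp p"
  unfolding Sp_def periodic_L_def
proof (intro CollectI conjI allI)
  show "(\<Sum>j\<in>J. c j * trig_exp j (x + 2 * pi)) = (\<Sum>j\<in>J. c j * trig_exp j x)" for x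
    by (simp add: trig_exp_periodic)
  show "set_integrable lebesgue {0..2 * pi} (\<lambda>x. \<Sum>j\<in>J. c j * trig_exp j x)"
    by (rule absolutely_integrable_continuous_real) (intro continuous_intros)
  show "(\<lambda>k. norm (fourier_coeff (\<lambda>x. \<Sum>j\<in>J. c j * trig_exp j x) k) powr p) summable_on UNIV"
    by (rule summable_on_finite_support[OF assms]) (simp add: fourier_coeff_trig_poly[OF assms])
qed

lemma trig_poly_not_AE_const:
  assumes J: "finite J" and k: "k \<in> J" "k \<noteq> 0" "c k \<noteq> 0"
  shows "\<not> (\<exists>c0. AE x in lebesgue. (\<Sum>j\<in>J. c j * trig_exp j x) = c0)"
proof
  assume "\<exists>c0. AE x in lebesgue. (\<Sum>j\<in>J. c j * trig_exp j x) = c0"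
  then obtain c0 where ae: "AE x in lebesgue. (\<Sum>j\<in>J. c j * trig_exp j x) = c0" by blast
  let ?e = "\<lambda>x. exp (- \<i> * of_int k * of_real x)"
  have "(LINT x:{0..2*pi}|lebesgue. (\<Sum>j\<in>J. c j * trig_exp j x) * ?e x)
      = (LINT x:{0..2*pi}|lebesgue. c0 * ?e x)"
    by (rule set_lebesgue_integral_cong_AE)
       (auto intro!: measurable_completion borel_measurable_continuous_onI continuous_intros
             intro: AE_mp[OF ae])
  then have "fourier_coeff (\<lambda>x. \<Sum>j\<in>J. c j * trig_exp j x) k = fourier_coeff (\<lambda>x. c0) k"
    unfolding fourier_coeff_def by simp
  then show False using k by (simp add: fourier_coeff_trig_poly[OF J] fourier_coeff_const)
qed

section \<open>Best approximation and the modulus of smoothness\<close>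

lemma Sp_absolutely_integrable: "f \<in> Sp p \<Longrightarrow> f absolutely_integrable_on {0..2*pi}"
  unfolding Sp_def periodic_L_def by auto

lemma Sp_summable: "f \<in> Sp p \<Longrightarrow> (\<lambda>k. norm (fourier_coeff f k) powr p) summable_on UNIV"
  unfolding Sp_def by auto

lemma seq_norm_nonneg: "0 \<le> seq_norm p c"
  unfolding seq_norm_def by simp

definition fourier_tail :: "nat \<Rightarrow> (real \<Rightarrow> complex) \<Rightarrow> real \<Rightarrow> real" where
  "fourier_tail n f p = (\<Sum>\<^sub>\<infinity>k. if int n \<le> \<bar>k\<bar> then norm (fourier_coeff f k) powr p else 0)"

lemma fourier_tail_nonneg: "0 \<le> fourier_tail n f p"
  unfolding fourier_tail_def by (rule infsum_nonneg) auto

lemma zero_in_trig_polys: "(\<lambda>x. 0) \<in> trig_polys m"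
  using trig_poly_in_trig_polys[of "{}" m] by simp

lemma best_approx_nonneg: "0 \<le> best_approx n f p"
  unfolding best_approx_def using zero_in_trig_polys
  by (intro cInf_greatest) (auto simp: seq_norm_nonneg)

lemma best_approx_le_fourier_tail:
  assumes f: "f \<in> Sp p" and p: "1 \<le> p" and n: "1 \<le> n"
  shows "best_approx n f p \<le> fourier_tail n f p powr (1 / p)"
proof -
  define J where "J = {- int (n - 1)..int (n - 1)}"
  define t where "t = (\<lambda>x. \<Sum>j\<in>J. fourier_coeff f j * trig_exp j x)"
  have t: "t \<in> trig_polys (n - 1)"
    unfolding t_def J_def by (rule trig_poly_in_trig_polys) simp
  have d: "fourier_coeff (\<lambda>x. f x - t x) k = (if int n \<le> \<bar>k\<bar> then fourier_coeff f k else 0)" for k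
    using n unfolding fourier_coeff_diff[OF Sp_absolutely_integrable[OF f] continuous_on_trig_polys[OF t]]
    by (auto simp: t_def J_def fourier_coeff_trig_poly)
  have "seq_norm p (fourier_coeff (\<lambda>x. f x - t x)) = fourier_tail n f p powr (1 / p)"
    unfolding seq_norm_def fourier_tail_def d
    by (intro arg_cong[where f="\<lambda>z. z powr (1 / p)"] infsum_cong) simp
  moreover have "best_approx n f p \<le> seq_norm p (fourier_coeff (\<lambda>x. f x - t x))"
    unfolding best_approx_def using t seq_norm_nonneg
    by (intro cInf_lower) (auto intro: bdd_belowI[where m=0])
  ultimately show ?thesis by simp
qed

lemma best_approx_powr_le_fourier_tail:
  assumes "f \<in> Sp p" "1 \<le> p" "1 \<le> n"
  shows "best_approx n f p powr p \<le> fourier_tail n f p"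
proof -
  have "best_approx n f p powr p \<le> (fourier_tail n f p powr (1 / p)) powr p"
    using best_approx_le_fourier_tail[OF assms] best_approx_nonneg assms(2) by (intro powr_mono2) auto
  also have "\<dots> = fourier_tail n f p" using fourier_tail_nonneg assms(2) by (simp add: powr_powr)
  finally show ?thesis .
qed

lemma best_approx_trig_poly_ge:
  assumes J: "finite J" "\<And>j. j \<in> J \<Longrightarrow> int n \<le> \<bar>j\<bar>" and p: "1 \<le> p" and n: "1 \<le> n"
  shows "(\<Sum>j\<in>J. norm (c j) powr p) powr (1 / p) \<le> best_approx n (\<lambda>x. \<Sum>j\<in>J. c j * trig_exp j x) p"
  unfolding best_approx_def
proof (rule cInf_greatest, use zero_in_trig_polys in blast, safe)
  let ?f = "\<lambda>x. \<Sum>j\<in>J. c j * trig_exp j x"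
  fix t assume t: "t \<in> trig_polys (n - 1)"
  let ?d = "fourier_coeff (\<lambda>x. ?f x - t x)"
  have "?f absolutely_integrable_on {0..2*pi}"
    by (rule absolutely_integrable_continuous_real) (intro continuous_intros)
  then have d: "?d k = (if k \<in> J then c k else 0) - fourier_coeff t k" for k
    using fourier_coeff_diff continuous_on_trig_polys[OF t] fourier_coeff_trig_poly[OF J(1)] by simp
  have t0: "fourier_coeff t k = 0" if "int n \<le> \<bar>k\<bar>" for k
    using fourier_coeff_trig_polys_eq_0[OF t, of k] that n by (simp add: of_nat_diff)
  have "(\<lambda>k. norm (?d k) powr p) summable_on UNIV"
    by (rule summable_on_finite_support[of "J \<union> {- int (n - 1)..int (n - 1)}"])
       (use J(1) d t0 in auto)
  then have "(\<Sum>j\<in>J. norm (?d j) powr p) \<le> (\<Sum>\<^sub>\<infinity>k. norm (?d k) powr p)"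
    using J(1) by (intro finite_sum_le_infsum) auto
  moreover have "(\<Sum>j\<in>J. norm (c j) powr p) = (\<Sum>j\<in>J. norm (?d j) powr p)"
    using d t0 J(2) by (intro sum.cong) auto
  moreover have "0 \<le> (\<Sum>j\<in>J. norm (c j) powr p)" by (simp add: sum_nonneg)
  ultimately show "(\<Sum>j\<in>J. norm (c j) powr p) powr (1 / p) \<le> seq_norm p ?d"
    unfolding seq_norm_def using p by (intro powr_mono2) auto
qed

lemma PhiD:
  assumes "\<phi> \<in> Phi"
  shows "continuous_on UNIV \<phi>" "bounded (range \<phi>)" "\<And>t. 0 \<le> \<phi> t" "\<And>t. \<phi> (- t) = \<phi> t"
    "{t. \<phi> t = 0} \<in> null_sets lebesgue"
  using assms unfolding Phi_def by auto

lemma Phi_bounded_above: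
  assumes "\<phi> \<in> Phi"
  obtains B where "0 < B" "\<And>t. \<phi> t \<le> B"
proof -
  obtain B where "\<And>t. norm (\<phi> t) \<le> B" using PhiD(2)[OF assms] by (auto simp: bounded_iff)
  then have "\<And>t. \<phi> t \<le> max B 1" by (metis abs_le_D1 max.coboundedI1 real_norm_def)
  then show ?thesis using that[of "max B 1"] by auto
qed

lemma Phi_abs: "\<phi> \<in> Phi \<Longrightarrow> \<phi> \<bar>t\<bar> = \<phi> t"
  using PhiD(4) by (cases "t \<ge> 0") auto

lemma Phi_zero_on_interval:
  assumes "\<phi> \<in> Phi" "\<And>t. t \<in> {a..b} \<Longrightarrow> \<phi> t = 0"
  shows "b \<le> a"
proof -
  have "{a..b} \<subseteq> {t. \<phi> t = 0}" using assms by auto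
  then have "negligible {a..b}"
    using PhiD(5)[OF assms(1)] negligible_iff_null_sets negligible_subset by blast
  then show ?thesis using negligible_interval(1)[of a b] by (auto simp: box_real)
qed

lemma seq_norm_Delta:
  assumes "\<phi> \<in> Phi"
  shows "seq_norm p (Delta \<phi> h f) = (\<Sum>\<^sub>\<infinity>k. \<phi> (of_int k * h) powr p * norm (fourier_coeff f k) powr p) powr (1/p)"
  unfolding seq_norm_def Delta_def using PhiD(3)[OF assms] by (simp add: norm_mult powr_mult)

lemma Delta_powr_summable:
  assumes "\<phi> \<in> Phi" "f \<in> Sp p" "0 \<le> p" "\<And>t. \<phi> t \<le> B"
  shows "(\<lambda>k. \<phi> (of_int k * h) powr p * norm (fourier_coeff f k) powr p) summable_on UNIV"
    and "(\<Sum>\<^sub>\<infinity>k. \<phi> (of_int k * h) powr p * norm (fourier_coeff f k) powr p)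
         \<le> B powr p * (\<Sum>\<^sub>\<infinity>k. norm (fourier_coeff f k) powr p)"
proof -
  have le: "\<phi> (of_int k * h) powr p * norm (fourier_coeff f k) powr p
      \<le> B powr p * norm (fourier_coeff f k) powr p" for k
    using assms PhiD(3)[OF assms(1)] by (intro mult_right_mono powr_mono2) auto
  have sg: "(\<lambda>k. B powr p * norm (fourier_coeff f k) powr p) summable_on UNIV"
    using Sp_summable[OF assms(2)] by (rule summable_on_cmult_right)
  show sm: "(\<lambda>k. \<phi> (of_int k * h) powr p * norm (fourier_coeff f k) powr p) summable_on UNIV"
    by (rule summable_on_comparison_test[OF sg le]) (simp add: PhiD(3)[OF assms(1)])
  show "(\<Sum>\<^sub>\<infinity>k. \<phi> (of_int k * h) powr p * norm (fourier_coeff f k) powr p)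
        \<le> B powr p * (\<Sum>\<^sub>\<infinity>k. norm (fourier_coeff f k) powr p)"
    using infsum_mono[OF sm sg le] infsum_cmult_right[OF Sp_summable[OF assms(2)]] by simp
qed

lemma seq_norm_Delta_le_modulus:
  assumes "\<phi> \<in> Phi" "f \<in> Sp p" "1 \<le> p" "\<bar>h\<bar> \<le> \<delta>"
  shows "seq_norm p (Delta \<phi> h f) \<le> modulus \<phi> f \<delta> p"
  unfolding modulus_def
proof (rule cSup_upper)
  show "seq_norm p (Delta \<phi> h f) \<in> {seq_norm p (Delta \<phi> h f) |h. \<bar>h\<bar> \<le> \<delta>}"
    using assms by auto
  obtain B where B: "\<And>t. \<phi> t \<le> B" using Phi_bounded_above[OF assms(1)] by blast
  show "bdd_above {seq_norm p (Delta \<phi> h f) |h. \<bar>h\<bar> \<le> \<delta>}"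
  proof (rule bdd_aboveI[where M="(B powr p * (\<Sum>\<^sub>\<infinity>k. norm (fourier_coeff f k) powr p)) powr (1/p)"], safe)
    fix h' :: real
    show "seq_norm p (Delta \<phi> h' f) \<le> (B powr p * (\<Sum>\<^sub>\<infinity>k. norm (fourier_coeff f k) powr p)) powr (1/p)"
      unfolding seq_norm_Delta[OF assms(1)] using assms B PhiD(3)[OF assms(1)]
      by (intro powr_mono2 Delta_powr_summable infsum_nonneg) auto
  qed
qed

lemma modulus_nonneg:
  assumes "\<phi> \<in> Phi" "f \<in> Sp p" "1 \<le> p" "0 \<le> \<delta>"
  shows "0 \<le> modulus \<phi> f \<delta> p"
proof -
  have "seq_norm p (Delta \<phi> 0 f) \<le> modulus \<phi> f \<delta> p"
    by (rule seq_norm_Delta_le_modulus) (use assms in auto)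
  then show ?thesis using seq_norm_nonneg order_trans by blast
qed

lemma sum_le_modulus_powr:
  assumes "\<phi> \<in> Phi" "f \<in> Sp p" "1 \<le> p" "\<bar>h\<bar> \<le> \<delta>" "finite F"
  shows "(\<Sum>k\<in>F. \<phi> (of_int k * h) powr p * norm (fourier_coeff f k) powr p) \<le> modulus \<phi> f \<delta> p powr p"
proof -
  let ?X = "\<Sum>\<^sub>\<infinity>k. \<phi> (of_int k * h) powr p * norm (fourier_coeff f k) powr p"
  obtain B where "\<And>t. \<phi> t \<le> B" using Phi_bounded_above[OF assms(1)] by blast
  then have "(\<Sum>k\<in>F. \<phi> (of_int k * h) powr p * norm (fourier_coeff f k) powr p) \<le> ?X"
    using assms Delta_powr_summable[OF assms(1,2)] by (intro finite_sum_le_infsum) auto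
  also have "?X = (?X powr (1/p)) powr p"
    using assms by (simp add: powr_powr infsum_nonneg)
  also have "\<dots> \<le> modulus \<phi> f \<delta> p powr p"
    using seq_norm_Delta_le_modulus[OF assms(1-4)] seq_norm_Delta[OF assms(1)] assms(3)
    by (intro powr_mono2) (auto simp: infsum_nonneg)
  finally show ?thesis .
qed

text \<open>This is where the hypothesis that the zeros of \<open>\<phi>\<close> form a null set enters.\<close>
lemma fourier_coeff_eq_0_if_modulus_eq_0:
  assumes "\<phi> \<in> Phi" "f \<in> Sp p" "1 \<le> p" "0 < \<delta>" "modulus \<phi> f \<delta> p = 0" "k \<noteq> 0"
  shows "fourier_coeff f k = 0"
proof (rule ccontr)
  assume nz: "fourier_coeff f k \<noteq> 0"
  have zero: "\<phi> (of_int k * h) = 0" if "h \<in> {0..\<delta>}" for h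
  proof -
    have "(\<Sum>j\<in>{k}. \<phi> (of_int j * h) powr p * norm (fourier_coeff f j) powr p) \<le> 0"
      using sum_le_modulus_powr[OF assms(1-3), of h \<delta> "{k}"] that assms(5) by simp
    then show ?thesis using nz PhiD(3)[OF assms(1)] by (simp add: mult_le_0_iff)
  qed
  then have "\<phi> t = 0" if t: "t \<in> {0..\<bar>of_int k\<bar> * \<delta>}" for t
  proof -
    have "t / \<bar>of_int k\<bar> \<in> {0..\<delta>}" using t assms(6) by (auto simp: field_simps)
    moreover have "\<bar>of_int k * (t / \<bar>of_int k\<bar>)\<bar> = t" using t assms(6) by (simp add: abs_mult)
    ultimately show ?thesis using Phi_abs[OF assms(1)] zero by metis
  qed
  then have "\<bar>of_int k\<bar> * \<delta> \<le> 0" by (rule Phi_zero_on_interval[OF assms(1)])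
  then show False using assms(4,6) by (simp add: mult_le_0_iff)
qed

lemma best_approx_eq_0_if_modulus_eq_0:
  assumes "\<phi> \<in> Phi" "f \<in> Sp p" "1 \<le> p" "1 \<le> n" "0 < \<tau>" "modulus \<phi> f (\<tau> / real n) p = 0"
  shows "best_approx n f p = 0"
proof -
  have "fourier_tail n f p = 0"
    unfolding fourier_tail_def using assms
    by (intro infsum_0) (auto intro!: fourier_coeff_eq_0_if_modulus_eq_0[OF assms(1-3) _ assms(6)])
  then show ?thesis
    using best_approx_le_fourier_tail[OF assms(2-4)] best_approx_nonneg[of n f p] by simp
qed

lemma modulus_trig_poly_le:
  assumes \<phi>: "\<phi> \<in> Phi" and J: "finite J" "\<And>j. j \<in> J \<Longrightarrow> 0 < j" and p: "1 \<le> p" and "0 \<le> \<delta>"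
    and T: "\<And>h. 0 \<le> h \<Longrightarrow> h \<le> \<delta> \<Longrightarrow> (\<Sum>j\<in>J. \<phi> (of_int j * h) powr p * norm (c j) powr p) \<le> T"
  shows "modulus \<phi> (\<lambda>x. \<Sum>j\<in>J. c j * trig_exp j x) \<delta> p \<le> T powr (1/p)"
  unfolding modulus_def
proof (rule cSup_least)
  show "{seq_norm p (Delta \<phi> h (\<lambda>x. \<Sum>j\<in>J. c j * trig_exp j x)) |h. \<bar>h\<bar> \<le> \<delta>} \<noteq> {}"
    using \<open>0 \<le> \<delta>\<close> by (auto intro!: exI[of _ 0])
next
  fix x assume "x \<in> {seq_norm p (Delta \<phi> h (\<lambda>x. \<Sum>j\<in>J. c j * trig_exp j x)) |h. \<bar>h\<bar> \<le> \<delta>}"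
  then obtain h where h: "\<bar>h\<bar> \<le> \<delta>"
    and x: "x = seq_norm p (Delta \<phi> h (\<lambda>x. \<Sum>j\<in>J. c j * trig_exp j x))" by auto
  let ?g = "\<lambda>k. \<phi> (of_int k * h) powr p * norm (fourier_coeff (\<lambda>x. \<Sum>j\<in>J. c j * trig_exp j x) k) powr p"
  have "(\<Sum>\<^sub>\<infinity>k. ?g k) = sum ?g J"
    by (rule infsum_finite_support[OF J(1)]) (simp add: fourier_coeff_trig_poly[OF J(1)])
  also have "\<dots> = (\<Sum>j\<in>J. \<phi> (of_int j * \<bar>h\<bar>) powr p * norm (c j) powr p)"
  proof (intro sum.cong refl)
    fix j assume "j \<in> J"
    then have "\<bar>of_int j * h\<bar> = of_int j * \<bar>h\<bar>" using J(2)[of j] by (simp add: abs_mult)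
    then have "\<phi> (of_int j * h) = \<phi> (of_int j * \<bar>h\<bar>)"
      using Phi_abs[OF \<phi>, of "of_int j * h"] by simp
    then show "?g j = \<phi> (of_int j * \<bar>h\<bar>) powr p * norm (c j) powr p"
      using \<open>j \<in> J\<close> by (simp add: fourier_coeff_trig_poly[OF J(1)])
  qed
  also have "\<dots> \<le> T" using T[of "\<bar>h\<bar>"] h by auto
  finally show "x \<le> T powr (1/p)"
    unfolding x seq_norm_Delta[OF \<phi>] using p by (intro powr_mono2) (auto simp: infsum_nonneg)
qed

section \<open>Lebesgue--Stieltjes measures of functions in \<open>V(\<tau>)\<close>\<close>

lemma sets_LS_measure [simp, measurable_cong]: "sets (LS_measure \<tau> v) = sets borel"
  unfolding LS_measure_def by simp

lemma space_LS_measure [simp]: "space (LS_measure \<tau> v) = UNIV"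
  unfolding LS_measure_def by simp

lemma Vset_monoD: "v \<in> Vset \<tau> \<Longrightarrow> x \<in> {0..\<tau>} \<Longrightarrow> y \<in> {0..\<tau>} \<Longrightarrow> x \<le> y \<Longrightarrow> v x \<le> v y"
  unfolding Vset_def by (auto simp: mono_on_def)

lemma Vset_less:
  assumes "v \<in> Vset \<tau>"
  shows "v 0 < v \<tau>"
proof -
  from assms obtain a b where ab: "a \<in> {0..\<tau>}" "b \<in> {0..\<tau>}" "v a \<noteq> v b"
    unfolding Vset_def by auto
  then have "v 0 \<le> v a" "v a \<le> v \<tau>" "v 0 \<le> v b" "v b \<le> v \<tau>"
    by (auto intro!: Vset_monoD[OF assms])
  then show ?thesis using ab by linarith
qed

lemma ident_in_Vset:
  assumes "0 < \<tau>"
  shows "(\<lambda>x. x) \<in> Vset \<tau>"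
  unfolding Vset_def using assms
  by (intro CollectI conjI bexI[of _ 0] bexI[of _ \<tau>]) (auto simp: mono_on_def)

context
  fixes \<tau> :: real and v :: "real \<Rightarrow> real"
  assumes v: "v \<in> Vset \<tau>" and \<tau>: "0 < \<tau>"
begin

private lemma bdd_below_v: "0 \<le> x \<Longrightarrow> bdd_below (v ` {x<..\<tau>})"
  by (rule bdd_belowI[where m="v 0"]) (auto intro!: Vset_monoD[OF v])

private lemma Inf_v_le: "0 \<le> x \<Longrightarrow> z \<in> {x<..\<tau>} \<Longrightarrow> Inf (v ` {x<..\<tau>}) \<le> v z"
  by (rule cInf_lower) (auto intro: bdd_below_v)

lemma LS_dist_mono: "x \<le> y \<Longrightarrow> LS_dist \<tau> v x \<le> LS_dist \<tau> v y"
proof -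
  assume xy: "x \<le> y"
  have Inf_ge: "v 0 \<le> Inf (v ` {x<..\<tau>})" if "0 \<le> x" "x < \<tau>" for x
    using that by (intro cInf_greatest) (auto intro!: Vset_monoD[OF v])
  consider "x < 0" | "0 \<le> x" "\<tau> \<le> y" | "0 \<le> x" "y < \<tau>" by linarith
  then show ?thesis
  proof cases
    case 1
    then show ?thesis using Inf_ge Vset_less[OF v] by (auto simp: LS_dist_def)
  next
    case 2
    then show ?thesis using Inf_v_le[of x \<tau>] \<tau> by (auto simp: LS_dist_def)
  next
    case 3
    then have "Inf (v ` {x<..\<tau>}) \<le> Inf (v ` {y<..\<tau>})"
      using xy bdd_below_v by (intro cInf_superset_mono) auto
    then show ?thesis using 3 xy by (auto simp: LS_dist_def)
  qed
qed

lemma LS_dist_right_cont: "continuous (at_right a) (LS_dist \<tau> v)"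
proof (subst continuous_at_right_real_increasing[OF LS_dist_mono], safe)
  fix e :: real assume e: "0 < e"
  consider "a < 0" | "\<tau> \<le> a" | "0 \<le> a" "a < \<tau>" by linarith
  then show "\<exists>d>0. LS_dist \<tau> v (a + d) - LS_dist \<tau> v a < e"
  proof cases
    case 1
    then show ?thesis using e by (intro exI[of _ "- a / 2"]) (auto simp: LS_dist_def)
  next
    case 2
    then show ?thesis using e \<tau> by (intro exI[of _ 1]) (auto simp: LS_dist_def)
  next
    case 3
    then obtain z where z: "z \<in> {a<..\<tau>}" "v z < Inf (v ` {a<..\<tau>}) + e"
      using cInf_less_iff[OF _ bdd_below_v, of a "Inf (v ` {a<..\<tau>}) + e"] e by auto
    define d where "d = (z - a) / 2"
    have d: "0 < d" "a + d < z" using z unfolding d_def by (auto simp: field_simps)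
    have "LS_dist \<tau> v (a + d) \<le> v z"
      using d z 3 Inf_v_le[of "a + d" z] by (auto simp: LS_dist_def)
    then show ?thesis using d z 3 by (intro exI[of _ d]) (auto simp: LS_dist_def)
  qed
qed

lemma emeasure_LS_measure_le: "emeasure (LS_measure \<tau> v) {0..\<tau>} \<le> ennreal (v \<tau> - v 0)"
proof -
  have "emeasure (LS_measure \<tau> v) {0..\<tau>} \<le> emeasure (LS_measure \<tau> v) {-1<..\<tau>}"
    by (rule emeasure_mono) auto
  also have "\<dots> = ennreal (LS_dist \<tau> v \<tau> - LS_dist \<tau> v (-1))"
    unfolding LS_measure_def using \<tau>
    by (intro emeasure_interval_measure_Ioc LS_dist_mono LS_dist_right_cont) auto
  also have "\<dots> = ennreal (v \<tau> - v 0)" using \<tau> by (simp add: LS_dist_def)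
  finally show ?thesis .
qed

end

lemma Inf_image_greaterThanAtMost_right_cont:
  fixes F :: "real \<Rightarrow> real"
  assumes mono: "\<And>x y. x \<le> y \<Longrightarrow> F x \<le> F y" and cont: "continuous (at_right x) F" and "x < b"
  shows "Inf (F ` {x<..b}) = F x"
proof (rule antisym)
  have bdd: "bdd_below (F ` {x<..b})" by (rule bdd_belowI[where m="F x"]) (auto intro: mono)
  show "Inf (F ` {x<..b}) \<le> F x"
  proof (rule field_le_epsilon)
    fix e :: real assume "0 < e"
    with cont obtain d where d: "0 < d" "F (x + d) - F x < e"
      using continuous_at_right_real_increasing[of F x, OF mono] by blast
    have "Inf (F ` {x<..b}) \<le> F (x + min d (b - x))"
      using d \<open>x < b\<close> by (intro cInf_lower[OF _ bdd]) auto
    also have "\<dots> \<le> F (x + d)" by (intro mono) simp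
    finally show "Inf (F ` {x<..b}) \<le> F x + e" using d by simp
  qed
  show "F x \<le> Inf (F ` {x<..b})"
    using \<open>x < b\<close> by (intro cInf_greatest) (auto intro: mono)
qed

lemma (in real_distribution) cdf_supported:
  assumes supp: "emeasure M (UNIV - {0..\<tau>}) = 0"
  shows "x < 0 \<Longrightarrow> cdf M x = 0" and "\<tau> \<le> x \<Longrightarrow> cdf M x = 1"
proof -
  have null: "measure M A = 0" if "A \<subseteq> UNIV - {0..\<tau>}" "A \<in> sets borel" for A
    using emeasure_mono[of A "UNIV - {0..\<tau>}" M] that supp by (simp add: measure_def)
  show "x < 0 \<Longrightarrow> cdf M x = 0"
    unfolding cdf_def by (rule null) auto
  assume "\<tau> \<le> x"
  then have "measure M {x<..} = 0" by (intro null) auto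
  moreover have "measure M {..x} + measure M {x<..} = 1"
  proof -
    have "{..x} \<union> {x<..} = UNIV" "{..x} \<inter> {x<..} = {}" by auto
    then show ?thesis using finite_measure_Union[of "{..x}" "{x<..}"] prob_space by simp
  qed
  ultimately show "cdf M x = 1" by (simp add: cdf_def)
qed

lemma LS_measure_eq_real_distribution:
  assumes M: "real_distribution M" and supp: "emeasure M (UNIV - {0..\<tau>}) = 0" and \<tau>: "0 < \<tau>"
  obtains v where "v \<in> Vset \<tau>" "v \<tau> - v 0 = 1" "LS_measure \<tau> v = M"
proof -
  interpret real_distribution M by (rule M)
  define v where "v x = (if x \<le> 0 then 0 else cdf M x)" for x
  have v0: "v 0 = 0" and v\<tau>: "v \<tau> = 1" using \<tau> cdf_supported[OF supp] by (auto simp: v_def)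
  have "v \<in> Vset \<tau>" unfolding Vset_def
  proof (intro CollectI conjI)
    show "mono_on {0..\<tau>} v"
      by (rule mono_onI) (auto simp: v_def cdf_nonneg cdf_nondecreasing)
    show "bounded (v ` {0..\<tau>})"
      by (rule boundedI[where B=1]) (auto simp: v_def cdf_nonneg cdf_bounded_prob)
    show "\<exists>a\<in>{0..\<tau>}. \<exists>b\<in>{0..\<tau>}. v a \<noteq> v b"
      using \<tau> v0 v\<tau> by (intro bexI[of _ 0] bexI[of _ \<tau>]) auto
  qed
  have "LS_dist \<tau> v x = cdf M x" for x
  proof -
    consider "x < 0" | "\<tau> \<le> x" | "0 \<le> x" "x < \<tau>" by linarith
    then show ?thesis
    proof cases
      case 3
      then have "v ` {x<..\<tau>} = cdf M ` {x<..\<tau>}" by (auto simp: v_def image_def)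
      then show ?thesis using 3 Inf_image_greaterThanAtMost_right_cont[of "cdf M" x \<tau>]
        by (simp add: LS_dist_def cdf_nondecreasing cdf_is_right_cont)
    qed (use \<tau> v0 v\<tau> cdf_supported[OF supp] in \<open>auto simp: LS_dist_def\<close>)
  qed
  then have "LS_dist \<tau> v = cdf M" ..
  then have "LS_measure \<tau> v = interval_measure (cdf M)" by (simp add: LS_measure_def)
  also have "\<dots> = M"
  proof (rule cdf_unique[OF _ M])
    show "real_distribution (interval_measure (cdf M))"
      by (rule real_distribution_interval_measure)
         (auto intro: cdf_nondecreasing cdf_is_right_cont cdf_lim_at_bot cdf_lim_at_top_prob)
    show "cdf (interval_measure (cdf M)) = cdf M"
      by (rule cdf_interval_measure) (auto intro: cdf_nondecreasing cdf_is_right_cont cdf_lim_at_bot)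
  qed
  finally show ?thesis using that \<open>v \<in> Vset \<tau>\<close> v0 v\<tau> by simp
qed

definition phi_kernel :: "nat \<Rightarrow> (real \<Rightarrow> real) \<Rightarrow> real \<Rightarrow> nat \<Rightarrow> real \<Rightarrow> real" where
  "phi_kernel n \<phi> p k u = \<phi> (real k * u / real n) powr p"

lemma I_fun_phi_kernel: "I_fun n \<phi> p \<tau> v =
    (INF k\<in>{k. n \<le> k}. \<integral>\<^sup>+ u. indicator {0..\<tau>} u * ennreal (phi_kernel n \<phi> p k u) \<partial>LS_measure \<tau> v)"
  unfolding I_fun_def phi_kernel_def ..

lemma phi_kernel_nonneg: "0 \<le> phi_kernel n \<phi> p k u"
  unfolding phi_kernel_def by simp

lemma isCont_phi_kernel:
  assumes "\<phi> \<in> Phi" "0 < p"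
  shows "isCont (phi_kernel n \<phi> p k) u"
proof -
  have "isCont \<phi> x" for x
    using PhiD(1)[OF assms(1)] continuous_on_eq_continuous_at by blast
  moreover have "isCont (\<lambda>u. real k / real n * u) u" by (intro continuous_intros)
  ultimately have "isCont (\<lambda>u. \<phi> (real k / real n * u)) u"
    using continuous_at_compose[of u "\<lambda>u. real k / real n * u" \<phi>] by (simp add: o_def)
  then show ?thesis
    unfolding phi_kernel_def isCont_def using assms(2) PhiD(3)[OF assms(1)]
    by (intro tendsto_powr') auto
qed

lemma borel_measurable_phi_kernel:
  "\<phi> \<in> Phi \<Longrightarrow> 0 < p \<Longrightarrow> phi_kernel n \<phi> p k \<in> borel_measurable borel"
  by (intro borel_measurable_continuous_onI continuous_at_imp_continuous_on ballI isCont_phi_kernel)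

lemma phi_kernel_bounded:
  assumes "\<phi> \<in> Phi" "0 \<le> p"
  obtains B where "0 < B" "\<And>k u. phi_kernel n \<phi> p k u \<le> B"
proof -
  obtain B where "0 < B" "\<And>t. \<phi> t \<le> B" using Phi_bounded_above[OF assms(1)] by blast
  then show ?thesis
    using that[of "B powr p"] assms PhiD(3) by (auto simp: phi_kernel_def intro: powr_mono2)
qed

lemma phi_kernel_nat_abs:
  assumes "\<phi> \<in> Phi"
  shows "phi_kernel n \<phi> p (nat \<bar>k\<bar>) u = \<phi> (of_int k * (u / real n)) powr p"
proof -
  have "\<phi> (\<bar>of_int k\<bar> * (u / real n)) = \<phi> (of_int k * (u / real n))"
    by (cases "k \<ge> 0") (auto simp: PhiD(4)[OF assms])
  then show ?thesis by (simp add: phi_kernel_def)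
qed

lemma I_fun_le:
  assumes "v \<in> Vset \<tau>" "0 < \<tau>" "0 \<le> B" "\<And>k u. phi_kernel n \<phi> p k u \<le> B"
  shows "I_fun n \<phi> p \<tau> v \<le> ennreal (B * (v \<tau> - v 0))"
proof -
  have "I_fun n \<phi> p \<tau> v \<le> \<integral>\<^sup>+ u. indicator {0..\<tau>} u * ennreal (phi_kernel n \<phi> p n u) \<partial>LS_measure \<tau> v"
    unfolding I_fun_phi_kernel by (intro INF_lower) simp
  also have "\<dots> \<le> \<integral>\<^sup>+ u. ennreal B * indicator {0..\<tau>} u \<partial>LS_measure \<tau> v"
    using assms(4) by (intro nn_integral_mono) (auto simp: indicator_def intro!: ennreal_leI)
  also have "\<dots> = ennreal B * emeasure (LS_measure \<tau> v) {0..\<tau>}"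
    by (subst nn_integral_cmult_indicator) auto
  also have "\<dots> \<le> ennreal B * ennreal (v \<tau> - v 0)"
    by (intro mult_left_mono emeasure_LS_measure_le assms(1,2)) auto
  also have "\<dots> = ennreal (B * (v \<tau> - v 0))"
    using assms(3) Vset_less[OF assms(1)] by (simp add: ennreal_mult)
  finally show ?thesis .
qed

section \<open>An approximate minimax theorem\<close>

definition discrete_prob :: "'a set \<Rightarrow> 'a set \<Rightarrow> ('a \<Rightarrow> real) \<Rightarrow> bool" where
  "discrete_prob S U w \<longleftrightarrow> finite U \<and> U \<subseteq> S \<and> (\<forall>x\<in>U. 0 \<le> w x) \<and> sum w U = 1"

definition weighted_mean :: "'a set \<Rightarrow> ('a \<Rightarrow> real) \<Rightarrow> ('a \<Rightarrow> real) \<Rightarrow> real" where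
  "weighted_mean U w h = (\<Sum>x\<in>U. w x * h x)"

definition mix_point :: "real \<Rightarrow> 'a \<Rightarrow> 'a set \<Rightarrow> ('a \<Rightarrow> real) \<Rightarrow> 'a \<Rightarrow> real" where
  "mix_point l u U w x = (1 - l) * (if x \<in> U then w x else 0) + l * (if x = u then 1 else 0)"

lemma weighted_mean_mix_point:
  assumes "finite U"
  shows "weighted_mean (insert u U) (mix_point l u U w) h = (1 - l) * weighted_mean U w h + l * h u"
proof -
  have "mix_point l u U w x * h x
      = (1 - l) * (if x \<in> U then w x * h x else 0) + l * (if x = u then h x else 0)" for x
    by (simp add: mix_point_def algebra_simps)
  then have "weighted_mean (insert u U) (mix_point l u U w) h
      = (1 - l) * (\<Sum>x\<in>insert u U. if x \<in> U then w x * h x else 0)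
        + l * (\<Sum>x\<in>insert u U. if x = u then h x else 0)"
    unfolding weighted_mean_def by (simp only: sum.distrib sum_distrib_left)
  also have "(\<Sum>x\<in>insert u U. if x \<in> U then w x * h x else 0) = weighted_mean U w h"
    using assms by (simp add: weighted_mean_def sum.If_cases Int_absorb1 subset_insertI)
  finally show ?thesis using assms by (simp add: sum.delta)
qed

lemma discrete_prob_mix_point:
  assumes "discrete_prob S U w" "u \<in> S" "0 \<le> l" "l \<le> 1"
  shows "discrete_prob S (insert u U) (mix_point l u U w)"
proof -
  have "finite U" using assms(1) by (simp add: discrete_prob_def)
  then have "sum (mix_point l u U w) (insert u U) = 1"
    using weighted_mean_mix_point[of U u l w "\<lambda>_. 1"] assms(1)
    by (simp add: weighted_mean_def discrete_prob_def)
  then show ?thesis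
    using assms unfolding discrete_prob_def mix_point_def by (auto intro!: add_nonneg_nonneg)
qed

lemma weighted_mean_bounds:
  assumes "discrete_prob S U w" "\<And>x. x \<in> S \<Longrightarrow> 0 \<le> h x \<and> h x \<le> B"
  shows "0 \<le> weighted_mean U w h" "weighted_mean U w h \<le> B"
proof -
  have U: "finite U" "U \<subseteq> S" "\<And>x. x \<in> U \<Longrightarrow> 0 \<le> w x" "sum w U = 1"
    using assms(1) by (auto simp: discrete_prob_def)
  show "0 \<le> weighted_mean U w h"
    unfolding weighted_mean_def using U assms(2) by (auto intro!: sum_nonneg)
  have "weighted_mean U w h \<le> (\<Sum>x\<in>U. w x * B)"
    unfolding weighted_mean_def using U assms(2) by (auto intro!: sum_mono mult_left_mono)
  also have "\<dots> = B" using U by (simp add: sum_distrib_right[symmetric])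
  finally show "weighted_mean U w h \<le> B" .
qed

definition shortfall :: "'i set \<Rightarrow> ('i \<Rightarrow> 'a \<Rightarrow> real) \<Rightarrow> real \<Rightarrow> 'a set \<Rightarrow> ('a \<Rightarrow> real) \<Rightarrow> real" where
  "shortfall K g t U w = (\<Sum>k\<in>K. (max 0 (t - weighted_mean U w (g k)))\<^sup>2)"

lemma shortfall_first_order:
  fixes g :: "'i \<Rightarrow> 'a \<Rightarrow> real" and l B :: real
  assumes UW: "discrete_prob S U w" and u: "u \<in> S" and l: "0 \<le> l" "l \<le> 1"
    and g: "\<And>k x. x \<in> S \<Longrightarrow> 0 \<le> g k x \<and> g k x \<le> B"
    and near: "shortfall K g t U w < shortfall K g t (insert u U) (mix_point l u U w) + \<eta>"
  defines "a \<equiv> \<lambda>k. max 0 (t - weighted_mean U w (g k))"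
  shows "2 * l * (\<Sum>k\<in>K. a k * (g k u - weighted_mean U w (g k))) < \<eta> + l\<^sup>2 * (real (card K) * B\<^sup>2)"
proof -
  define d where "d k = g k u - weighted_mean U w (g k)" for k
  have fin: "finite U" using UW by (simp add: discrete_prob_def)
  have sq: "(max 0 (x - l * y))\<^sup>2 \<le> (max 0 x - l * y)\<^sup>2" for x y :: real
    using l by (cases "x - l * y \<le> 0") (auto intro!: power_mono simp: max_def)
  have "shortfall K g t (insert u U) (mix_point l u U w) \<le> (\<Sum>k\<in>K. (a k - l * d k)\<^sup>2)"
    unfolding shortfall_def weighted_mean_mix_point[OF fin]
  proof (intro sum_mono)
    fix k
    have "t - ((1 - l) * weighted_mean U w (g k) + l * g k u)
        = (t - weighted_mean U w (g k)) - l * d k"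
      by (simp add: d_def algebra_simps)
    then show "(max 0 (t - ((1 - l) * weighted_mean U w (g k) + l * g k u)))\<^sup>2 \<le> (a k - l * d k)\<^sup>2"
      unfolding a_def by (simp only: sq)
  qed
  also have "\<dots> = shortfall K g t U w - 2 * l * (\<Sum>k\<in>K. a k * d k) + l\<^sup>2 * (\<Sum>k\<in>K. (d k)\<^sup>2)"
    unfolding shortfall_def a_def
    by (simp add: power2_diff sum.distrib sum_subtractf sum_distrib_left algebra_simps)
  finally have mix: "shortfall K g t (insert u U) (mix_point l u U w)
      \<le> shortfall K g t U w - 2 * l * (\<Sum>k\<in>K. a k * d k) + l\<^sup>2 * (\<Sum>k\<in>K. (d k)\<^sup>2)" .
  have "(\<Sum>k\<in>K. (d k)\<^sup>2) \<le> (\<Sum>k\<in>K. B\<^sup>2)"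
  proof (intro sum_mono)
    fix k
    have "\<bar>d k\<bar> \<le> B"
      using g[OF u, of k] weighted_mean_bounds[OF UW, of "g k" B] g unfolding d_def by auto
    then show "(d k)\<^sup>2 \<le> B\<^sup>2" using power_mono[OF _ abs_ge_zero, of "d k" B 2] by simp
  qed
  then have "l\<^sup>2 * (\<Sum>k\<in>K. (d k)\<^sup>2) \<le> l\<^sup>2 * (real (card K) * B\<^sup>2)"
    by (intro mult_left_mono) auto
  with mix near show ?thesis unfolding d_def by linarith
qed

lemma near_minimizer:
  fixes f :: "'a \<Rightarrow> real"
  assumes "A \<noteq> {}" "\<And>x. x \<in> A \<Longrightarrow> c \<le> f x" "0 < \<eta>"
  obtains x where "x \<in> A" "\<And>y. y \<in> A \<Longrightarrow> f x < f y + \<eta>"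
proof -
  have bdd: "bdd_below (f ` A)" by (meson assms(2) bdd_belowI2)
  then obtain x where "x \<in> A" "f x < Inf (f ` A) + \<eta>"
    using cInf_less_iff[of "f ` A" "Inf (f ` A) + \<eta>"] assms(1,3) by auto
  moreover have "Inf (f ` A) \<le> f y" if "y \<in> A" for y
    using bdd that by (simp add: cInf_lower)
  ultimately show ?thesis using that by fastforce
qed

lemma shortfall_near_minimizer:
  assumes "S \<noteq> {}" "0 < \<eta>"
  obtains U w where "discrete_prob S U w"
    "\<And>U' w'. discrete_prob S U' w' \<Longrightarrow> shortfall K g t U w < shortfall K g t U' w' + \<eta>"
proof -
  obtain x0 where "x0 \<in> S" using assms(1) by auto
  then have "discrete_prob S {x0} (\<lambda>_. 1)" by (simp add: discrete_prob_def)
  then have "{(U, w). discrete_prob S U w} \<noteq> {}" by blast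
  moreover have "0 \<le> case_prod (shortfall K g t) Uw" for Uw
    by (cases Uw) (simp add: shortfall_def sum_nonneg)
  ultimately obtain Uw where "Uw \<in> {(U, w). discrete_prob S U w}"
    and "\<And>Uw'. Uw' \<in> {(U, w). discrete_prob S U w} \<Longrightarrow>
       case_prod (shortfall K g t) Uw < case_prod (shortfall K g t) Uw' + \<eta>"
    using assms(2) by (rule near_minimizer[of _ 0 "case_prod (shortfall K g t)"]) blast+
  then show ?thesis using that by (cases Uw) fastforce
qed

lemma weighted_sum_less_at_shortfall_near_minimizer:
  fixes g :: "'i \<Rightarrow> 'a \<Rightarrow> real" and l B \<epsilon> :: real
  assumes UW: "discrete_prob S U w" and u: "u \<in> S" and l: "0 < l" "l \<le> 1"
    and g: "\<And>k x. x \<in> S \<Longrightarrow> 0 \<le> g k x \<and> g k x \<le> B"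
    and near: "shortfall K g t U w < shortfall K g t (insert u U) (mix_point l u U w) + l * \<epsilon>"
    and small: "l * (real (card K) * B\<^sup>2) \<le> \<epsilon>"
  defines "a \<equiv> \<lambda>k. max 0 (t - weighted_mean U w (g k))"
  shows "(\<Sum>k\<in>K. a k * g k u) < t * sum a K + \<epsilon>"
proof -
  have "2 * l * (\<Sum>k\<in>K. a k * (g k u - weighted_mean U w (g k)))
      < l * \<epsilon> + l\<^sup>2 * (real (card K) * B\<^sup>2)"
    unfolding a_def using l by (intro shortfall_first_order[OF UW u _ _ g near]) auto
  also have "\<dots> \<le> 2 * l * \<epsilon>"
    using l mult_left_mono[OF small, of l] by (simp add: power2_eq_square algebra_simps)
  finally have incr: "(\<Sum>k\<in>K. a k * (g k u - weighted_mean U w (g k))) < \<epsilon>"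
    using l by simp
  have "a k * weighted_mean U w (g k) \<le> a k * t" for k
    by (cases "weighted_mean U w (g k) < t") (auto simp: a_def)
  then have "(\<Sum>k\<in>K. a k * weighted_mean U w (g k)) \<le> t * sum a K"
    by (simp add: sum_distrib_left mult.commute sum_mono)
  moreover have "(\<Sum>k\<in>K. a k * g k u)
      = (\<Sum>k\<in>K. a k * weighted_mean U w (g k)) + (\<Sum>k\<in>K. a k * (g k u - weighted_mean U w (g k)))"
    by (simp add: sum.distrib[symmetric] algebra_simps)
  ultimately show ?thesis using incr by linarith
qed

text \<open>Instead of a separation argument, the convex combination is the normalized shortfall vector of
  an approximate minimizer of the shortfall.\<close>
lemma convex_combination_or_discrete_prob:
  fixes g :: "'i \<Rightarrow> 'a \<Rightarrow> real"
  assumes K: "finite K" and S: "S \<noteq> {}" and g: "\<And>k x. x \<in> S \<Longrightarrow> 0 \<le> g k x \<and> g k x \<le> B"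
    and "t < t'"
  shows "(\<exists>a. (\<forall>k\<in>K. 0 \<le> a k) \<and> sum a K = 1 \<and> (\<forall>u\<in>S. (\<Sum>k\<in>K. a k * g k u) \<le> t')) \<or>
         (\<forall>\<delta>>0. \<exists>U w. discrete_prob S U w \<and> (\<forall>k\<in>K. t - \<delta> \<le> weighted_mean U w (g k)))"
proof (rule disjCI)
  assume "\<not> (\<forall>\<delta>>0. \<exists>U w. discrete_prob S U w \<and> (\<forall>k\<in>K. t - \<delta> \<le> weighted_mean U w (g k)))"
  then obtain \<delta> where "0 < \<delta>"
    and low: "\<And>U w. discrete_prob S U w \<Longrightarrow> \<exists>k\<in>K. weighted_mean U w (g k) < t - \<delta>"
    by (auto simp: not_le)
  define \<epsilon> where "\<epsilon> = (t' - t) * \<delta>"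
  define Q where "Q = real (card K) * B\<^sup>2"
  define l where "l = min 1 (\<epsilon> / (Q + 1))"
  have "0 < \<epsilon>" using \<open>t < t'\<close> \<open>0 < \<delta>\<close> by (simp add: \<epsilon>_def)
  moreover have "0 \<le> Q" by (simp add: Q_def)
  ultimately have l: "0 < l" "l \<le> 1" "l * Q \<le> \<epsilon>"
    by (auto simp: l_def min_def field_simps mult_left_mono)
  obtain U w where UW: "discrete_prob S U w"
    and near: "\<And>U' w'. discrete_prob S U' w' \<Longrightarrow> shortfall K g t U w < shortfall K g t U' w' + l * \<epsilon>"
    using shortfall_near_minimizer[OF S, of "l * \<epsilon>" K g t] l \<open>0 < \<epsilon>\<close> by auto
  define a where "a k = max 0 (t - weighted_mean U w (g k))" for k
  obtain k0 where "k0 \<in> K" "weighted_mean U w (g k0) < t - \<delta>" using low[OF UW] by blast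
  moreover have "a k0 \<le> sum a K"
    using K \<open>k0 \<in> K\<close> by (intro member_le_sum) (auto simp: a_def)
  ultimately have "\<delta> < sum a K" by (simp add: a_def)
  show "\<exists>a. (\<forall>k\<in>K. 0 \<le> a k) \<and> sum a K = 1 \<and> (\<forall>u\<in>S. (\<Sum>k\<in>K. a k * g k u) \<le> t')"
  proof (intro exI[of _ "\<lambda>k. a k / sum a K"] conjI ballI)
    show "0 \<le> a k / sum a K" for k using \<open>\<delta> < sum a K\<close> \<open>0 < \<delta>\<close> by (simp add: a_def)
    show "(\<Sum>k\<in>K. a k / sum a K) = 1"
      using \<open>\<delta> < sum a K\<close> \<open>0 < \<delta>\<close> by (simp add: sum_divide_distrib[symmetric])
    fix u assume "u \<in> S"
    have "shortfall K g t U w < shortfall K g t (insert u U) (mix_point l u U w) + l * \<epsilon>"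
      using l \<open>u \<in> S\<close> by (intro near discrete_prob_mix_point[OF UW]) auto
    from weighted_sum_less_at_shortfall_near_minimizer[OF UW \<open>u \<in> S\<close> l(1,2) g this l(3)[unfolded Q_def]]
    have "(\<Sum>k\<in>K. a k * g k u) < t * sum a K + \<epsilon>" by (simp add: a_def)
    also have "\<dots> \<le> t' * sum a K"
      using \<open>\<delta> < sum a K\<close> \<open>t < t'\<close> mult_left_mono[of \<delta> "sum a K" "t' - t"]
      by (simp add: \<epsilon>_def algebra_simps)
    finally show "(\<Sum>k\<in>K. a k / sum a K * g k u) \<le> t'"
      using \<open>\<delta> < sum a K\<close> \<open>0 < \<delta>\<close> by (simp add: sum_divide_distrib[symmetric] field_simps)
  qed
qed

section \<open>Weak limits of finitely supported probabilities\<close>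

definition discrete_measure :: "real set \<Rightarrow> (real \<Rightarrow> real) \<Rightarrow> real measure" where
  "discrete_measure U w = distr (point_measure U (\<lambda>x. ennreal (w x))) borel (\<lambda>x. x)"

lemma real_distribution_discrete_measure:
  assumes "discrete_prob S U w"
  shows "real_distribution (discrete_measure U w)"
proof -
  have "emeasure (point_measure U (\<lambda>x. ennreal (w x))) (space (point_measure U (\<lambda>x. ennreal (w x)))) = 1"
    using assms by (simp add: discrete_prob_def emeasure_point_measure_finite space_point_measure)
  then have "prob_space (point_measure U (\<lambda>x. ennreal (w x)))" by (rule prob_spaceI)
  then show ?thesis unfolding discrete_measure_def
    by (rule prob_space.real_distribution_distr) simp
qed

lemma integral_discrete_measure:
  assumes "discrete_prob S U w" "h \<in> borel_measurable borel" "\<And>x. 0 \<le> h x"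
  shows "integral\<^sup>L (discrete_measure U w) h = weighted_mean U w h"
proof -
  have U: "finite U" "\<And>x. x \<in> U \<Longrightarrow> 0 \<le> w x"
    using assms(1) by (auto simp: discrete_prob_def)
  have "(\<integral>\<^sup>+ x. ennreal (h x) \<partial>discrete_measure U w) = (\<Sum>x\<in>U. ennreal (w x) * ennreal (h x))"
    unfolding discrete_measure_def using assms(2)
    by (simp add: nn_integral_distr nn_integral_point_measure_finite[OF U(1)])
  also have "\<dots> = ennreal (weighted_mean U w h)"
    using U assms(3) by (simp add: weighted_mean_def ennreal_mult[symmetric] sum_nonneg)
  finally show ?thesis
    using assms(2,3) U by (simp add: integral_eq_nn_integral discrete_measure_def weighted_mean_def sum_nonneg)
qed

lemma emeasure_discrete_measure_outside:
  assumes "discrete_prob S U w" "A \<in> sets borel" "A \<inter> S = {}"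
  shows "emeasure (discrete_measure U w) A = 0"
proof -
  have "A \<inter> U = {}" using assms by (auto simp: discrete_prob_def)
  then show ?thesis
    unfolding discrete_measure_def using assms(2)
    by (simp add: emeasure_distr space_point_measure emeasure_point_measure_finite2)
qed

lemma tight_discrete_measures:
  assumes "\<And>N. discrete_prob {a..b} (U N) (W N)" "a \<le> b"
  shows "tight (\<lambda>N. discrete_measure (U N) (W N))"
  unfolding tight_def
proof (intro conjI allI impI)
  show "real_distribution (discrete_measure (U N) (W N))" for N
    by (rule real_distribution_discrete_measure[OF assms(1)])
  fix e :: real assume "0 < e"
  have "measure (discrete_measure (U N) (W N)) {a - 1<..b} = 1" for N
  proof -
    interpret real_distribution "discrete_measure (U N) (W N)"
      by (rule real_distribution_discrete_measure[OF assms(1)])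
    have "measure (discrete_measure (U N) (W N)) (UNIV - {a - 1<..b}) = 0"
      using emeasure_discrete_measure_outside[OF assms(1), of "UNIV - {a - 1<..b}"]
      by (fastforce simp: measure_def)
    then show ?thesis using prob_compl[of "UNIV - {a - 1<..b}"] by (simp add: Diff_Diff_Int)
  qed
  then show "\<exists>a' b'::real. a' < b' \<and> (\<forall>N. 1 - e < measure (discrete_measure (U N) (W N)) {a'<..b'})"
    using \<open>0 < e\<close> \<open>a \<le> b\<close> by (intro exI[of _ "a - 1"] exI[of _ b]) auto
qed

lemma weak_conv_supported:
  assumes \<mu>: "\<And>j. real_distribution (\<mu> j)" and M: "real_distribution M" and conv: "weak_conv_m \<mu> M"
    and supp: "\<And>j. emeasure (\<mu> j) (UNIV - {a..b}) = 0" and "a \<le> b"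
  shows "emeasure M (UNIV - {a..b}) = 0"
proof -
  interpret M: real_distribution M by (rule M)
  define h where "h x = min 1 (max 0 (a - x) + max 0 (x - b))" for x
  have hc: "isCont h x" for x unfolding h_def by (intro continuous_intros)
  then have hm: "h \<in> borel_measurable borel"
    by (intro borel_measurable_continuous_onI continuous_at_imp_continuous_on) auto
  have h0: "0 \<le> h x" "norm (h x) \<le> 1" for x by (auto simp: h_def)
  have hz: "h x = 0 \<longleftrightarrow> x \<in> {a..b}" for x
    using \<open>a \<le> b\<close> by (auto simp: h_def min_def max_def)
  have "integral\<^sup>L (\<mu> j) h = 0" for j
  proof -
    have "AE x in \<mu> j. x \<in> {a..b}"
      using supp[of j] real_distribution.events_eq_borel[OF \<mu>]
      by (intro AE_I[where N="UNIV - {a..b}"]) auto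
    then have "AE x in \<mu> j. h x = 0" by eventually_elim (simp add: hz)
    then show ?thesis by (rule integral_eq_zero_AE)
  qed
  moreover have "(\<lambda>j. integral\<^sup>L (\<mu> j) h) \<longlonglongrightarrow> integral\<^sup>L M h"
    using weak_conv_imp_integral_bdd_continuous_conv[OF \<mu> M conv hc h0(2)] .
  ultimately have "integral\<^sup>L M h = 0" by (simp add: LIMSEQ_const_iff)
  moreover have "integrable M h"
    using h0 hm by (intro M.integrable_const_bound[where B=1]) auto
  ultimately have "AE x in M. x \<in> {a..b}"
    using integral_nonneg_eq_0_iff_AE[of M h] h0 hz by simp
  then show ?thesis by (subst (asm) AE_iff_measurable[where N="UNIV - {a..b}"]) auto
qed

lemma discrete_prob_weak_limit:
  fixes g :: "nat \<Rightarrow> real \<Rightarrow> real"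
  assumes "a \<le> b" and g: "\<And>k x. isCont (g k) x" "\<And>k x. 0 \<le> g k x \<and> g k x \<le> B"
    and UW: "\<And>N. discrete_prob {a..b} (U N) (W N)"
    and lb: "\<And>N k. n \<le> k \<Longrightarrow> k \<le> N \<Longrightarrow> t - 1 / real (Suc N) \<le> weighted_mean (U N) (W N) (g k)"
  obtains M where "real_distribution M" "emeasure M (UNIV - {a..b}) = 0"
    "\<And>k. n \<le> k \<Longrightarrow> t \<le> integral\<^sup>L M (g k)"
proof -
  define \<mu> where "\<mu> N = discrete_measure (U N) (W N)" for N
  have \<mu>: "real_distribution (\<mu> N)" for N
    unfolding \<mu>_def by (rule real_distribution_discrete_measure[OF UW])
  obtain r M where r: "strict_mono r" and M: "real_distribution M" and conv: "weak_conv_m (\<mu> \<circ> r) M"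
    using tight_imp_convergent_subsubsequence[OF tight_discrete_measures[where U=U and W=W, OF UW \<open>a \<le> b\<close>] strict_mono_id]
    by (auto simp: \<mu>_def[abs_def])
  have gm: "g k \<in> borel_measurable borel" for k
    by (intro borel_measurable_continuous_onI continuous_at_imp_continuous_on) (auto simp: g(1))
  have "t \<le> integral\<^sup>L M (g k)" if "n \<le> k" for k
  proof (rule LIMSEQ_le)
    show "(\<lambda>j. t - 1 / real (Suc (r j))) \<longlonglongrightarrow> t"
      using tendsto_diff[OF tendsto_const LIMSEQ_subseq_LIMSEQ[OF LIMSEQ_Suc[OF lim_inverse_n'] r], of t]
      by (simp add: o_def)
    show "(\<lambda>j. integral\<^sup>L (\<mu> (r j)) (g k)) \<longlonglongrightarrow> integral\<^sup>L M (g k)"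
    proof -
      have bound: "norm (g k x) \<le> B" for x using g(2)[of k x] by simp
      show ?thesis
        using weak_conv_imp_integral_bdd_continuous_conv[OF _ M conv g(1) bound] \<mu> by (simp add: o_def)
    qed
    have "t - 1 / real (Suc (r j)) \<le> integral\<^sup>L (\<mu> (r j)) (g k)" if "k \<le> j" for j
      using lb[OF \<open>n \<le> k\<close>, of "r j"] seq_suble[OF r, of j] that g(2) gm
      by (simp add: \<mu>_def integral_discrete_measure[OF UW])
    then show "\<exists>N. \<forall>j\<ge>N. t - 1 / real (Suc (r j)) \<le> integral\<^sup>L (\<mu> (r j)) (g k)" by blast
  qed
  moreover have "emeasure M (UNIV - {a..b}) = 0"
    using \<mu> \<open>a \<le> b\<close> emeasure_discrete_measure_outside[OF UW, where A="UNIV - {a..b}"]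
    by (intro weak_conv_supported[OF _ M conv]) (auto simp: \<mu>_def)
  ultimately show ?thesis using that M by blast
qed

section \<open>The inequality, its sharpness, and the extremal \<open>v\<close>\<close>

text \<open>The Fourier coefficients \<open>c k\<close> of \<open>mixture_poly p n N a\<close> satisfy \<open>|c k| powr p = a k\<close>, so its modulus of
  smoothness is governed by the convex combination \<open>\<Sum>k. a k * g k u\<close> of the kernels, while its
  best approximation is at least \<open>(\<Sum>k. a k) powr (1/p) = 1\<close>.\<close>
definition mixture_poly :: "real \<Rightarrow> nat \<Rightarrow> nat \<Rightarrow> (nat \<Rightarrow> real) \<Rightarrow> real \<Rightarrow> complex" where
  "mixture_poly p n N a = (\<lambda>x. \<Sum>j\<in>int ` {n..N}. complex_of_real (a (nat j) powr (1 / p)) * trig_exp j x)"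

locale jackson_setting =
  fixes p \<tau> :: real and n :: nat and \<phi> :: "real \<Rightarrow> real"
  assumes p: "1 \<le> p" and \<tau>: "0 < \<tau>" and n: "1 \<le> n" and \<phi>: "\<phi> \<in> Phi"
begin

abbreviation "g \<equiv> phi_kernel n \<phi> p"

abbreviation "inf_ratio \<equiv> INF v\<in>Vset \<tau>. ratio n \<phi> p \<tau> v"

abbreviation "mixture_below N t \<equiv>
  \<exists>a. (\<forall>k\<in>{n..N}. 0 \<le> a k) \<and> sum a {n..N} = 1 \<and> (\<forall>u\<in>{0..\<tau>}. (\<Sum>k\<in>{n..N}. a k * g k u) \<le> t)"

lemma g_measurable [measurable]: "g k \<in> borel_measurable borel"
  using borel_measurable_phi_kernel \<phi> p by simp

lemma g_bounded:
  obtains B where "0 < B" "\<And>k u. 0 \<le> g k u \<and> g k u \<le> B"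
proof -
  obtain B where "0 < B" "\<And>k u. g k u \<le> B"
    by (rule phi_kernel_bounded[OF \<phi>, of p n]) (use p in auto)
  then show ?thesis using that[of B] by (simp add: phi_kernel_nonneg)
qed

lemma I_fun_less_top:
  assumes "v \<in> Vset \<tau>"
  shows "I_fun n \<phi> p \<tau> v < top"
proof -
  obtain B where "0 < B" "\<And>k u. 0 \<le> g k u \<and> g k u \<le> B" using g_bounded by blast
  then show ?thesis
    using assms \<tau> by (intro order.strict_trans1[OF I_fun_le[of v \<tau> B] ennreal_less_top]) auto
qed

lemma tail_kernel_sum_le_modulus_powr:
  assumes f: "f \<in> Sp p" and F: "finite F" and u: "u \<in> {0..\<tau>}"
  shows "(\<Sum>k\<in>F. (if int n \<le> \<bar>k\<bar> then norm (fourier_coeff f k) powr p else 0) * g (nat \<bar>k\<bar>) u)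
    \<le> modulus \<phi> f (\<tau> / real n) p powr p"
proof -
  have "(\<Sum>k\<in>F. (if int n \<le> \<bar>k\<bar> then norm (fourier_coeff f k) powr p else 0) * g (nat \<bar>k\<bar>) u)
      \<le> (\<Sum>k\<in>F. \<phi> (of_int k * (u / real n)) powr p * norm (fourier_coeff f k) powr p)"
    by (intro sum_mono) (auto simp: phi_kernel_nat_abs[OF \<phi>])
  also have "\<dots> \<le> modulus \<phi> f (\<tau> / real n) p powr p"
    using u n by (intro sum_le_modulus_powr[OF \<phi> f p _ F]) (auto simp: divide_right_mono)
  finally show ?thesis .
qed

lemma finite_tail_mult_I_fun_le:
  assumes f: "f \<in> Sp p" and v: "v \<in> Vset \<tau>" and F: "finite F"
  defines "a \<equiv> \<lambda>k. if int n \<le> \<bar>k\<bar> then norm (fourier_coeff f k) powr p else 0"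
  shows "ennreal (\<Sum>k\<in>F. a k) * I_fun n \<phi> p \<tau> v
    \<le> ennreal ((v \<tau> - v 0) * modulus \<phi> f (\<tau> / real n) p powr p)"
proof -
  let ?\<mu> = "LS_measure \<tau> v" and ?\<omega> = "modulus \<phi> f (\<tau> / real n) p"
  let ?J = "\<lambda>k. \<integral>\<^sup>+ u. indicator {0..\<tau>} u * ennreal (g k u) \<partial>?\<mu>"
  have a0: "0 \<le> a k" for k by (simp add: a_def)
  have "ennreal (a k) * I_fun n \<phi> p \<tau> v \<le> ennreal (a k) * ?J (nat \<bar>k\<bar>)" for k
    by (cases "int n \<le> \<bar>k\<bar>")
       (auto simp: a_def I_fun_phi_kernel intro!: mult_left_mono INF_lower)
  then have "(\<Sum>k\<in>F. ennreal (a k) * I_fun n \<phi> p \<tau> v) \<le> (\<Sum>k\<in>F. ennreal (a k) * ?J (nat \<bar>k\<bar>))"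
    by (rule sum_mono)
  then have "ennreal (\<Sum>k\<in>F. a k) * I_fun n \<phi> p \<tau> v \<le> (\<Sum>k\<in>F. ennreal (a k) * ?J (nat \<bar>k\<bar>))"
    using a0 by (simp add: sum_distrib_right[symmetric])
  also have "\<dots> = (\<Sum>k\<in>F. \<integral>\<^sup>+ u. indicator {0..\<tau>} u * ennreal (a k * g (nat \<bar>k\<bar>) u) \<partial>?\<mu>)"
    by (intro sum.cong refl, subst nn_integral_cmult[symmetric])
       (auto simp: ennreal_mult a0 phi_kernel_nonneg mult_ac)
  also have "\<dots> = \<integral>\<^sup>+ u. (\<Sum>k\<in>F. indicator {0..\<tau>} u * ennreal (a k * g (nat \<bar>k\<bar>) u)) \<partial>?\<mu>"
    by (rule nn_integral_sum[symmetric]) auto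
  also have "\<dots> \<le> \<integral>\<^sup>+ u. ennreal (?\<omega> powr p) * indicator {0..\<tau>} u \<partial>?\<mu>"
  proof (intro nn_integral_mono)
    fix u
    show "(\<Sum>k\<in>F. indicator {0..\<tau>} u * ennreal (a k * g (nat \<bar>k\<bar>) u))
        \<le> ennreal (?\<omega> powr p) * indicator {0..\<tau>} u"
    proof (cases "u \<in> {0..\<tau>}")
      case True
      then show ?thesis
        using tail_kernel_sum_le_modulus_powr[OF f F True]
        by (simp add: a_def phi_kernel_nonneg ennreal_leI)
    qed simp
  qed
  also have "\<dots> = ennreal (?\<omega> powr p) * emeasure ?\<mu> {0..\<tau>}"
    by (subst nn_integral_cmult_indicator) auto
  also have "\<dots> \<le> ennreal (?\<omega> powr p) * ennreal (v \<tau> - v 0)"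
    by (intro mult_left_mono emeasure_LS_measure_le v \<tau>) auto
  also have "\<dots> = ennreal ((v \<tau> - v 0) * ?\<omega> powr p)"
    using Vset_less[OF v] by (simp add: ennreal_mult mult.commute)
  finally show ?thesis .
qed

lemma fourier_tail_mult_I_fun_le:
  assumes f: "f \<in> Sp p" and v: "v \<in> Vset \<tau>"
  shows "ennreal (fourier_tail n f p) * I_fun n \<phi> p \<tau> v
    \<le> ennreal ((v \<tau> - v 0) * modulus \<phi> f (\<tau> / real n) p powr p)"
proof -
  define a where "a k = (if int n \<le> \<bar>k\<bar> then norm (fourier_coeff f k) powr p else 0)" for k
  define W where "W = (v \<tau> - v 0) * modulus \<phi> f (\<tau> / real n) p powr p"
  obtain i where i: "I_fun n \<phi> p \<tau> v = ennreal i" "0 \<le> i"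
    using I_fun_less_top[OF v] by (cases "I_fun n \<phi> p \<tau> v" rule: ennreal_cases) auto
  have "0 \<le> W" unfolding W_def using Vset_less[OF v] by simp
  have fin: "(\<Sum>k\<in>F. a k * i) \<le> W" if "finite F" for F
  proof -
    have "ennreal (\<Sum>k\<in>F. a k) * ennreal i \<le> ennreal W"
      using finite_tail_mult_I_fun_le[OF f v that, folded a_def] unfolding i(1) W_def .
    then have "ennreal ((\<Sum>k\<in>F. a k) * i) \<le> ennreal W"
      using i(2) by (simp add: ennreal_mult sum_nonneg a_def)
    then show ?thesis using \<open>0 \<le> W\<close> by (simp add: sum_distrib_right)
  qed
  have "a summable_on UNIV"
    by (rule summable_on_comparison_test[OF Sp_summable[OF f]]) (auto simp: a_def)
  then have "fourier_tail n f p * i \<le> W"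
    unfolding fourier_tail_def a_def[symmetric] infsum_cmult_left'[symmetric]
    by (intro infsum_le_finite_sums summable_on_cmult_left fin) auto
  then show ?thesis
    unfolding W_def[symmetric] i using ennreal_leI i(2) fourier_tail_nonneg
    by (metis ennreal_mult)
qed

lemma best_approx_quotient_le_ratio:
  assumes f: "f \<in> Sp p" and v: "v \<in> Vset \<tau>" and \<omega>: "0 < modulus \<phi> f (\<tau> / real n) p"
  shows "ennreal (best_approx n f p powr p / modulus \<phi> f (\<tau> / real n) p powr p) \<le> ratio n \<phi> p \<tau> v"
proof -
  let ?E = "best_approx n f p" and ?\<omega> = "modulus \<phi> f (\<tau> / real n) p"
  have v0: "0 < v \<tau> - v 0" using Vset_less[OF v] by simp
  obtain i where i: "I_fun n \<phi> p \<tau> v = ennreal i" "0 \<le> i"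
    using I_fun_less_top[OF v] by (cases "I_fun n \<phi> p \<tau> v" rule: ennreal_cases) auto
  show ?thesis
  proof (cases "i = 0")
    case True
    then show ?thesis unfolding ratio_def i using v0 by simp
  next
    case False
    with i have "0 < i" by simp
    have "ennreal (fourier_tail n f p * i) \<le> ennreal ((v \<tau> - v 0) * ?\<omega> powr p)"
      using fourier_tail_mult_I_fun_le[OF f v] i v0 by (simp add: ennreal_mult fourier_tail_nonneg)
    then have "fourier_tail n f p * i \<le> (v \<tau> - v 0) * ?\<omega> powr p"
      using v0 by simp
    then have "?E powr p * i \<le> (v \<tau> - v 0) * ?\<omega> powr p"
      using best_approx_powr_le_fourier_tail[OF f p n] \<open>0 < i\<close>
      by (meson mult_right_mono less_imp_le order_trans)
    then have "?E powr p / ?\<omega> powr p \<le> (v \<tau> - v 0) / i"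
      using \<open>0 < i\<close> \<omega> by (simp add: field_simps)
    then show ?thesis
      unfolding ratio_def i using \<open>0 < i\<close> v0 by (simp add: divide_ennreal ennreal_leI)
  qed
qed

lemma best_approx_le_C_const_modulus:
  assumes f: "f \<in> Sp p"
  shows "ennreal (best_approx n f p) \<le> C_const n \<phi> p \<tau> * ennreal (modulus \<phi> f (\<tau> / real n) p)"
proof -
  let ?E = "best_approx n f p" and ?\<omega> = "modulus \<phi> f (\<tau> / real n) p"
  have "0 \<le> ?\<omega>" using modulus_nonneg[OF \<phi> f p] \<tau> by simp
  consider "?\<omega> = 0" | "0 < ?\<omega>" "inf_ratio = top" | m where "0 < ?\<omega>" "inf_ratio = ennreal m" "0 \<le> m"
    using \<open>0 \<le> ?\<omega>\<close> ennreal_cases by (metis less_eq_real_def)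
  then show ?thesis
  proof cases
    case 1
    then show ?thesis using best_approx_eq_0_if_modulus_eq_0[OF \<phi> f p n \<tau>] by simp
  next
    case 2
    then show ?thesis unfolding C_const_def by (simp add: ennreal_mult_top)
  next
    case (3 m)
    have "ennreal (?E powr p / ?\<omega> powr p) \<le> inf_ratio"
      by (intro INF_greatest best_approx_quotient_le_ratio[OF f _ \<open>0 < ?\<omega>\<close>])
    then have "?E powr p \<le> m * ?\<omega> powr p"
      using 3 by (simp add: ennreal_le_iff field_simps)
    then have "(?E powr p) powr (1/p) \<le> (m * ?\<omega> powr p) powr (1/p)"
      using p by (intro powr_mono2) auto
    then have "?E \<le> m powr (1/p) * ?\<omega>"
      using 3 p best_approx_nonneg[of n f p] by (simp add: powr_mult powr_powr)
    then show ?thesis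
      unfolding C_const_def using 3 by (simp add: ennreal_mult[symmetric] ennreal_leI)
  qed
qed

lemma Vset_ratio_le_of_real_distribution:
  assumes M: "real_distribution M" and supp: "emeasure M (UNIV - {0..\<tau>}) = 0" and "0 < t"
    and lb: "\<And>k. n \<le> k \<Longrightarrow> t \<le> integral\<^sup>L M (g k)"
  obtains v where "v \<in> Vset \<tau>" "ratio n \<phi> p \<tau> v \<le> ennreal (1 / t)"
proof -
  interpret real_distribution M by (rule M)
  obtain v where v: "v \<in> Vset \<tau>" "v \<tau> - v 0 = 1" "LS_measure \<tau> v = M"
    using LS_measure_eq_real_distribution[OF M supp \<tau>] by blast
  obtain B where B: "\<And>k u. 0 \<le> g k u \<and> g k u \<le> B" using g_bounded by blast
  have "AE x in M. x \<in> {0..\<tau>}"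
    using supp by (intro AE_I[where N="UNIV - {0..\<tau>}"]) auto
  then have "ennreal t \<le> \<integral>\<^sup>+ u. indicator {0..\<tau>} u * ennreal (g k u) \<partial>M" if "n \<le> k" for k
  proof -
    have "ennreal t \<le> ennreal (integral\<^sup>L M (g k))" using lb[OF that] by (rule ennreal_leI)
    also have "\<dots> = (\<integral>\<^sup>+ u. ennreal (g k u) \<partial>M)"
      using B by (intro nn_integral_eq_integral[symmetric] integrable_const_bound[where B=B]) auto
    also have "\<dots> = (\<integral>\<^sup>+ u. indicator {0..\<tau>} u * ennreal (g k u) \<partial>M)"
      using \<open>AE x in M. x \<in> {0..\<tau>}\<close> by (intro nn_integral_cong_AE, eventually_elim) simp
    finally show ?thesis .
  qed
  then have "ennreal t \<le> I_fun n \<phi> p \<tau> v"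
    unfolding I_fun_phi_kernel v(3) by (intro INF_greatest) auto
  have "ratio n \<phi> p \<tau> v \<le> ennreal (1 / t)"
  proof (cases "I_fun n \<phi> p \<tau> v" rule: ennreal_cases)
    case (real r)
    with \<open>ennreal t \<le> I_fun n \<phi> p \<tau> v\<close> \<open>0 < t\<close> have "0 < r" "1 / r \<le> 1 / t"
      by (auto simp: frac_le)
    then show ?thesis
      unfolding ratio_def v(2) real by (subst divide_ennreal) (auto intro: ennreal_leI)
  qed (simp add: ratio_def)
  then show ?thesis using that v(1) by blast
qed

lemma exists_Vset_ratio_le_if_no_mixture_below:
  assumes "0 < t" and no_mixture: "\<And>N t'. 0 < t' \<Longrightarrow> t' < t \<Longrightarrow> \<not> mixture_below N t'"
  obtains v where "v \<in> Vset \<tau>" "ratio n \<phi> p \<tau> v \<le> ennreal (1 / t)"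
proof -
  obtain B where B: "\<And>k u. 0 \<le> g k u \<and> g k u \<le> B" using g_bounded by blast
  have "\<exists>U w. discrete_prob {0..\<tau>} U w \<and> (\<forall>k\<in>{n..N}. t - 1 / real (Suc N) \<le> weighted_mean U w (g k))"
    for N
  proof -
    define e where "e = 1 / real (Suc N)"
    have "0 < e" by (simp add: e_def)
    define t1 where "t1 = max (t / 4) (t - e / 2)"
    define t2 where "t2 = max (t / 2) (t - e / 4)"
    have "t1 < t2" "0 < t2" "t2 < t" "t - e / 2 \<le> t1"
      using \<open>0 < t\<close> \<open>0 < e\<close> by (auto simp: t1_def t2_def max_def)
    moreover have "mixture_below N t2 \<or>
        (\<forall>\<delta>>0. \<exists>U w. discrete_prob {0..\<tau>} U w \<and> (\<forall>k\<in>{n..N}. t1 - \<delta> \<le> weighted_mean U w (g k)))"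
      using B \<tau> \<open>t1 < t2\<close> by (intro convex_combination_or_discrete_prob) auto
    ultimately have "\<forall>\<delta>>0. \<exists>U w. discrete_prob {0..\<tau>} U w \<and> (\<forall>k\<in>{n..N}. t1 - \<delta> \<le> weighted_mean U w (g k))"
      using no_mixture by blast
    then obtain U w where UW: "discrete_prob {0..\<tau>} U w"
      and "\<forall>k\<in>{n..N}. t1 - e / 2 \<le> weighted_mean U w (g k)"
      using \<open>0 < e\<close> half_gt_zero by blast
    then have "\<forall>k\<in>{n..N}. t - e \<le> weighted_mean U w (g k)"
      using \<open>t - e / 2 \<le> t1\<close> by force
    then show ?thesis using UW unfolding e_def by blast
  qed
  then obtain U W where UW: "\<And>N. discrete_prob {0..\<tau>} (U N) (W N)"
    and lb: "\<And>N. \<forall>k\<in>{n..N}. t - 1 / real (Suc N) \<le> weighted_mean (U N) (W N) (g k)"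
    by metis
  have "isCont (g k) x" for k x using isCont_phi_kernel[OF \<phi>] p by simp
  then obtain M where "real_distribution M" "emeasure M (UNIV - {0..\<tau>}) = 0"
    "\<And>k. n \<le> k \<Longrightarrow> t \<le> integral\<^sup>L M (g k)"
    using discrete_prob_weak_limit[of 0 \<tau> g B U W n t] \<tau> B UW lb by auto
  then show ?thesis using Vset_ratio_le_of_real_distribution \<open>0 < t\<close> that by blast
qed

lemma mixture_poly_in_Sp: "mixture_poly p n N a \<in> Sp p"
  unfolding mixture_poly_def by (intro trig_poly_in_Sp) simp

lemma root_powr_cancel: "0 \<le> x \<Longrightarrow> (x powr (1 / p)) powr p = x"
  using p by (simp add: powr_powr)

lemma best_approx_mixture_poly_ge:
  assumes "\<And>k. k \<in> {n..N} \<Longrightarrow> 0 \<le> a k" "sum a {n..N} = 1"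
  shows "1 \<le> best_approx n (mixture_poly p n N a) p"
proof -
  have "(\<Sum>j\<in>int ` {n..N}. norm (complex_of_real (a (nat j) powr (1 / p))) powr p) = sum a {n..N}"
    using assms(1) by (simp add: sum.reindex root_powr_cancel)
  moreover have "int n \<le> \<bar>j\<bar>" if "j \<in> int ` {n..N}" for j using that by auto
  ultimately show ?thesis
    using best_approx_trig_poly_ge[of "int ` {n..N}" n p "\<lambda>j. complex_of_real (a (nat j) powr (1 / p))"]
      p n assms(2)
    unfolding mixture_poly_def by simp
qed

lemma modulus_mixture_poly_le:
  assumes a: "\<And>k. k \<in> {n..N} \<Longrightarrow> 0 \<le> a k"
    and below: "\<And>u. u \<in> {0..\<tau>} \<Longrightarrow> (\<Sum>k\<in>{n..N}. a k * g k u) \<le> t"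
  shows "modulus \<phi> (mixture_poly p n N a) (\<tau> / real n) p \<le> t powr (1 / p)"
  unfolding mixture_poly_def
proof (rule modulus_trig_poly_le[OF \<phi> _ _ p])
  show "finite (int ` {n..N})" "\<And>j. j \<in> int ` {n..N} \<Longrightarrow> 0 < j" "0 \<le> \<tau> / real n"
    using n \<tau> by auto
  fix h assume "0 \<le> h" "h \<le> \<tau> / real n"
  then have "real n * h \<in> {0..\<tau>}" using n by (auto simp: field_simps)
  moreover have "(\<Sum>j\<in>int ` {n..N}. \<phi> (of_int j * h) powr p * norm (complex_of_real (a (nat j) powr (1 / p))) powr p)
      = (\<Sum>k\<in>{n..N}. a k * g k (real n * h))"
    using n a by (simp add: sum.reindex root_powr_cancel phi_kernel_def mult.commute)
  ultimately show "(\<Sum>j\<in>int ` {n..N}. \<phi> (of_int j * h) powr p * norm (complex_of_real (a (nat j) powr (1 / p))) powr p) \<le> t"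
    using below by simp
qed

lemma mixture_poly_not_AE_const:
  assumes "k \<in> {n..N}" "0 < a k"
  shows "\<not> (\<exists>c. AE x in lebesgue. mixture_poly p n N a x = c)"
  unfolding mixture_poly_def using assms n p
  by (intro trig_poly_not_AE_const[of _ "int k"]) auto

lemma extremal_trig_poly:
  assumes mixture: "mixture_below N t"
  obtains f where "f \<in> Sp p" "\<not> (\<exists>c. AE x in lebesgue. f x = c)" "1 \<le> best_approx n f p"
    "0 < modulus \<phi> f (\<tau> / real n) p" "modulus \<phi> f (\<tau> / real n) p \<le> t powr (1 / p)"
proof -
  obtain a where a: "\<And>k. k \<in> {n..N} \<Longrightarrow> 0 \<le> a k" "sum a {n..N} = 1"
    and below: "\<And>u. u \<in> {0..\<tau>} \<Longrightarrow> (\<Sum>k\<in>{n..N}. a k * g k u) \<le> t"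
    using mixture by blast
  let ?f = "mixture_poly p n N a"
  have E: "1 \<le> best_approx n ?f p" by (rule best_approx_mixture_poly_ge[OF a])
  have "0 \<le> modulus \<phi> ?f (\<tau> / real n) p" using modulus_nonneg[OF \<phi> mixture_poly_in_Sp p] \<tau> by simp
  moreover have "modulus \<phi> ?f (\<tau> / real n) p \<noteq> 0"
    using best_approx_eq_0_if_modulus_eq_0[OF \<phi> mixture_poly_in_Sp p n \<tau>] E by auto
  moreover have "\<exists>k\<in>{n..N}. 0 < a k"
  proof (rule ccontr)
    assume "\<not> (\<exists>k\<in>{n..N}. 0 < a k)"
    then have "sum a {n..N} \<le> 0" by (intro sum_nonpos) (auto simp: not_less)
    then show False using a(2) by simp
  qed
  then obtain k where "k \<in> {n..N}" "0 < a k" by blast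
  ultimately show ?thesis
    using that[OF mixture_poly_in_Sp mixture_poly_not_AE_const E] modulus_mixture_poly_le[OF a(1) below]
    by simp
qed

lemma inverse_le_inf_ratio_if_mixture_below:
  assumes "mixture_below N t" "0 < t"
  shows "ennreal (1 / t) \<le> inf_ratio"
proof -
  obtain f where f: "f \<in> Sp p" and E: "1 \<le> best_approx n f p"
    and \<omega>: "0 < modulus \<phi> f (\<tau> / real n) p" "modulus \<phi> f (\<tau> / real n) p \<le> t powr (1 / p)"
    using extremal_trig_poly[OF assms(1)] by blast
  let ?E = "best_approx n f p" and ?\<omega> = "modulus \<phi> f (\<tau> / real n) p"
  have "?\<omega> powr p \<le> (t powr (1 / p)) powr p" using \<omega> p by (intro powr_mono2) auto
  then have "?\<omega> powr p \<le> t" using \<open>0 < t\<close> p by (simp add: powr_powr)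
  moreover have "1 \<le> ?E powr p" using E p by (simp add: ge_one_powr_ge_zero)
  ultimately have "1 / t \<le> ?E powr p / ?\<omega> powr p" using \<omega> by (intro frac_le) auto
  then have "ennreal (1 / t) \<le> ennreal (?E powr p / ?\<omega> powr p)" by (rule ennreal_leI)
  also have "\<dots> \<le> inf_ratio"
    by (intro INF_greatest best_approx_quotient_le_ratio[OF f _ \<omega>(1)])
  finally show ?thesis .
qed

lemma K_const_ge_if_mixture_below:
  assumes "mixture_below N t" "0 < t"
  shows "ennreal (1 / t powr (1 / p)) \<le> K_const n \<phi> p \<tau>"
proof -
  obtain f where f: "f \<in> Sp p" "\<not> (\<exists>c. AE x in lebesgue. f x = c)" and E: "1 \<le> best_approx n f p"
    and \<omega>: "0 < modulus \<phi> f (\<tau> / real n) p" "modulus \<phi> f (\<tau> / real n) p \<le> t powr (1 / p)"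
    using extremal_trig_poly[OF assms(1)] by blast
  let ?E = "best_approx n f p" and ?\<omega> = "modulus \<phi> f (\<tau> / real n) p"
  have "ennreal (1 / t powr (1 / p)) \<le> ennreal (?E / ?\<omega>)"
    using E \<omega> \<open>0 < t\<close> by (intro ennreal_leI frac_le) auto
  also have "\<dots> = ennreal ?E / ennreal ?\<omega>" using E \<omega> by (simp add: divide_ennreal)
  also have "\<dots> \<le> K_const n \<phi> p \<tau>"
    unfolding K_const_def using f by (intro SUP_upper) auto
  finally show ?thesis .
qed

lemma inf_ratio_pos: "0 < inf_ratio"
proof -
  obtain B where B: "0 < B" "\<And>k u. 0 \<le> g k u \<and> g k u \<le> B" using g_bounded by blast
  have "ennreal (1 / B) \<le> ratio n \<phi> p \<tau> v" if v: "v \<in> Vset \<tau>" for v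
  proof -
    have v0: "0 < v \<tau> - v 0" using Vset_less[OF v] by simp
    have I: "I_fun n \<phi> p \<tau> v \<le> ennreal (B * (v \<tau> - v 0))"
      using B by (intro I_fun_le[OF v \<tau>]) auto
    show ?thesis
    proof (cases "I_fun n \<phi> p \<tau> v" rule: ennreal_cases)
      case (real i)
      show ?thesis
      proof (cases "i = 0")
        case False
        with real have "0 < i" by simp
        moreover have "i \<le> B * (v \<tau> - v 0)" using I real B v0 by simp
        ultimately have "1 / B \<le> (v \<tau> - v 0) / i" using B v0 by (simp add: field_simps)
        then show ?thesis
          unfolding ratio_def real using \<open>0 < i\<close> v0 by (simp add: divide_ennreal ennreal_leI)
      qed (use real v0 in \<open>simp add: ratio_def\<close>)
    qed (use I in \<open>simp add: top_unique\<close>)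
  qed
  then have "ennreal (1 / B) \<le> inf_ratio" by (rule INF_greatest)
  moreover have "0 < ennreal (1 / B)" using B(1) by simp
  ultimately show ?thesis by (rule order.strict_trans2[rotated])
qed

lemma inf_ratio_attained: "\<exists>v\<in>Vset \<tau>. ratio n \<phi> p \<tau> v = inf_ratio"
proof (cases inf_ratio rule: ennreal_cases)
  case (real m)
  with inf_ratio_pos have "0 < m" by simp
  have no_mixture: "\<not> mixture_below N t'" if "0 < t'" "t' < 1 / m" for N t'
  proof
    assume "mixture_below N t'"
    then have "1 / t' \<le> m"
      using inverse_le_inf_ratio_if_mixture_below[of N t'] that real \<open>0 < m\<close> by simp
    then show False using that \<open>0 < m\<close> by (simp add: field_simps)
  qed
  obtain v where v: "v \<in> Vset \<tau>" "ratio n \<phi> p \<tau> v \<le> ennreal (1 / (1 / m))"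
    by (rule exists_Vset_ratio_le_if_no_mixture_below[of "1 / m"]) (use \<open>0 < m\<close> no_mixture in auto)
  then have "ratio n \<phi> p \<tau> v = inf_ratio"
    using real INF_lower[OF v(1), of "ratio n \<phi> p \<tau>"] by (simp add: antisym)
  then show ?thesis using v(1) by blast
next
  case top
  then show ?thesis
    using ident_in_Vset[OF \<tau>] INF_lower[OF ident_in_Vset[OF \<tau>], of "ratio n \<phi> p \<tau>"]
    by (metis top_unique)
qed

lemma K_const_le_C_const: "K_const n \<phi> p \<tau> \<le> C_const n \<phi> p \<tau>"
  unfolding K_const_def
proof (rule SUP_least)
  fix f assume "f \<in> {f \<in> Sp p. \<not> (\<exists>c. AE x in lebesgue. f x = c)}"
  then have f: "f \<in> Sp p" by simp
  let ?E = "best_approx n f p" and ?\<omega> = "modulus \<phi> f (\<tau> / real n) p"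
  show "ennreal ?E / ennreal ?\<omega> \<le> C_const n \<phi> p \<tau>"
  proof (cases "?\<omega> = 0")
    case True
    then show ?thesis using best_approx_eq_0_if_modulus_eq_0[OF \<phi> f p n \<tau>] by simp
  next
    case False
    have "ennreal ?E / ennreal ?\<omega> \<le> C_const n \<phi> p \<tau> * ennreal ?\<omega> / ennreal ?\<omega>"
      by (intro divide_right_mono_ennreal best_approx_le_C_const_modulus[OF f])
    also have "\<dots> = C_const n \<phi> p \<tau>"
      using False modulus_nonneg[OF \<phi> f p, of "\<tau> / real n"] \<tau> by (intro ennreal_mult_divide_eq) auto
    finally show ?thesis .
  qed
qed

lemma powr_less_inf_ratio_if_less_C_const:
  assumes "0 < x" "ennreal x < C_const n \<phi> p \<tau>"
  shows "ennreal (x powr p) < inf_ratio"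
proof (cases inf_ratio rule: ennreal_cases)
  case (real m)
  then have "x < m powr (1 / p)" using assms by (simp add: C_const_def ennreal_less_iff)
  then have "x powr p < (m powr (1 / p)) powr p" using assms(1) p by (intro powr_less_mono2) auto
  then show ?thesis using real p by (simp add: powr_powr ennreal_less_iff)
qed simp

lemma mixture_below_if_inverse_less_ratio:
  assumes "0 < t" "\<And>v. v \<in> Vset \<tau> \<Longrightarrow> ennreal (1 / t) < ratio n \<phi> p \<tau> v"
  obtains N t' where "0 < t'" "t' < t" "mixture_below N t'"
proof -
  have "\<exists>N t'. 0 < t' \<and> t' < t \<and> mixture_below N t'"
  proof (rule ccontr)
    assume "\<not> (\<exists>N t'. 0 < t' \<and> t' < t \<and> mixture_below N t')"
    then obtain v where "v \<in> Vset \<tau>" "ratio n \<phi> p \<tau> v \<le> ennreal (1 / t)"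
      using exists_Vset_ratio_le_if_no_mixture_below[OF \<open>0 < t\<close>] by blast
    then show False using assms(2) leD by blast
  qed
  then obtain N t' where "0 < t'" "t' < t" "mixture_below N t'" by blast
  then show ?thesis by (rule that)
qed

lemma C_const_le_K_const: "C_const n \<phi> p \<tau> \<le> K_const n \<phi> p \<tau>"
proof (rule dense_le)
  fix y assume y: "y < C_const n \<phi> p \<tau>"
  show "y \<le> K_const n \<phi> p \<tau>"
  proof (cases y rule: ennreal_cases)
    case (real x)
    show ?thesis
    proof (cases "x = 0")
      case False
      with real have "0 < x" by simp
      define t where "t = 1 / x powr p"
      have "0 < t" using \<open>0 < x\<close> by (simp add: t_def)
      have "ennreal (1 / t) < ratio n \<phi> p \<tau> v" if "v \<in> Vset \<tau>" for v
        using powr_less_inf_ratio_if_less_C_const[OF \<open>0 < x\<close>] y real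
          INF_lower[OF that, of "ratio n \<phi> p \<tau>"]
        by (simp add: t_def order.strict_trans2)
      then obtain N t' where "0 < t'" "t' < t" "mixture_below N t'"
        by (rule mixture_below_if_inverse_less_ratio[OF \<open>0 < t\<close>])
      have "t' powr (1 / p) \<le> t powr (1 / p)" using \<open>0 < t'\<close> \<open>t' < t\<close> p by (intro powr_mono2) auto
      also have "\<dots> = 1 / x" using \<open>0 < x\<close> p by (simp add: t_def powr_divide powr_powr)
      finally have "x \<le> 1 / t' powr (1 / p)" using \<open>0 < x\<close> \<open>0 < t'\<close> by (simp add: field_simps)
      then show ?thesis
        using K_const_ge_if_mixture_below[OF \<open>mixture_below N t'\<close> \<open>0 < t'\<close>] real
        by (meson ennreal_leI order_trans)
    qed (use real in simp)
  qed (use y in simp)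
qed

end

theorem theorem2:
  fixes p \<tau> :: real and n :: nat and \<phi> :: "real \<Rightarrow> real"
  assumes "1 \<le> p" and "0 < \<tau>" and "1 \<le> n" and "\<phi> \<in> Phi"
  shows "(\<forall>f \<in> Sp p. ennreal (best_approx n f p)
            \<le> C_const n \<phi> p \<tau> * ennreal (modulus \<phi> f (\<tau> / real n) p))
    \<and> (\<exists>v\<in>Vset \<tau>. ratio n \<phi> p \<tau> v = (INF w\<in>Vset \<tau>. ratio n \<phi> p \<tau> w))
    \<and> K_const n \<phi> p \<tau> = C_const n \<phi> p \<tau>"
proof -
  interpret jackson_setting p \<tau> n \<phi> using assms by unfold_locales
  show ?thesis
    using best_approx_le_C_const_modulus inf_ratio_attained K_const_le_C_const C_const_le_K_const
    by (auto intro: antisym)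
qed

end
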